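(* Let $x_1,\dots,x_{n-1}>0$, $\gamma,\delta>0$, $\gamma\neq1\neq\delta$, set $x_0=1$, and for a matrix below let $\lambda=\lambda_{\max}$ denote its Perron eigenvalue and $\mathbf{w}^{EM}=(w_1,\dots,w_n)^T$ its principal right eigenvector. Then: Case 1 ($n\ge4$; matrix $\mathbf{P}$ with entries $x_{j-1}/x_{i-1}$ except $p_{12}=\delta x_1$, $p_{21}=1/(\delta x_1)$, $p_{13}=\gamma x_2$, $p_{31}=1/(\gamma x_2)$). $\mathbf{w}^{EM}$ can be taken as: $w_1=\delta\gamma\lambda(\lambda-n+1)$, $w_2=\frac1{x_1}[\gamma\lambda-(n-2)\gamma+\delta+(n-3)\delta\gamma]$, $w_3=\frac1{x_2}[\delta\lambda-(n-2)\delta+\gamma+(n-3)\delta\gamma]$, $w_i=\frac1{x_{i-1}}[\gamma+\delta+\delta\gamma\lambda-2\delta\gamma]$ ($i\ge4$). Moreover there are real constants $c_{11},c_{12},c_{13}$ such that $\mathbf{w}^{EM}=c_{11}\mathbf{u}=c_{12}\mathbf{v}=c_{13}\mathbf{z}$, where $u_1=x_1\gamma\lambda[\delta\lambda-(n-2)\delta+\gamma+n-3]$, $u_2=\gamma\lambda^3-(n-1)\gamma\lambda^2-(n-3)(\gamma^2-2\gamma+1)$, $u_3=\frac{x_1}{x_2}[\gamma\lambda^2-\gamma\lambda+\delta\lambda+(n-3)(\delta\gamma-\delta-\gamma+1)]$, $u_i=\frac{x_1}{x_{i-1}}[\gamma\lambda^2-\gamma\lambda-\gamma+\delta+\delta\gamma\lambda-\delta\gamma+\gamma^2]$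 ($i\ge4$); $v_1=x_2\delta\lambda[\delta+\gamma\lambda-(n-2)\gamma+n-3]$, $v_2=\frac{x_2}{x_1}[\delta\lambda^2-\delta\lambda+\gamma\lambda+(n-3)(\delta\gamma-\delta-\gamma+1)]$, $v_3=\delta\lambda^3-(n-1)\delta\lambda^2-(n-3)(\delta^2-2\delta+1)$, $v_i=\frac{x_2}{x_{i-1}}[\delta\lambda^2-\delta\lambda+\gamma-\delta+\delta^2+\delta\gamma\lambda-\delta\gamma]$ ($i\ge4$); $z_1=x_3\delta\gamma\lambda(\delta+\gamma+\lambda-2)$, $z_2=\frac{x_3}{x_1}[\delta\gamma\lambda^2-\delta\gamma\lambda+\gamma^2+\gamma\lambda-\gamma-\delta\gamma+\delta]$, $z_3=\frac{x_3}{x_2}[\delta\gamma\lambda^2-\delta\gamma\lambda-\delta\gamma+\gamma+\delta^2+\delta\lambda-\delta]$, $z_i=\frac{x_3}{x_{i-1}}[\delta\gamma\lambda^2-4\delta\gamma+\gamma+\delta+\delta^2\gamma+\gamma^2\delta]$ ($i\ge4$). Case 2A ($n=4$; matrix $\mathbf{Q}$ with entries $x_{j-1}/x_{i-1}$ except $q_{12}=\delta x_1$, $q_{21}=1/(\delta x_1)$, $q_{34}=\gamma x_3/x_2$, $q_{43}=x_2/(\gamma x_3)$). $\mathbf{w}^{EM}$ can be taken as: $w_1=\delta(\lambda^3\gamma-3\lambda^2\gamma-1+2\gamma-\gamma^2)$, $w_2=\frac1{x_1}[\lambda^2\gamma-2\lambda\gamma+\delta+2\lambda\delta\gamma-2\delta\gamma+\delta\gamma^2]$,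 $w_3=\frac{\gamma}{x_2}[\gamma+\lambda-1+\delta\lambda^2-2\lambda\delta+\delta+\lambda\delta\gamma-\delta\gamma]$, $w_4=\frac1{x_3}[1+\lambda\gamma-\gamma+\lambda\delta-\delta+\delta\gamma\lambda^2-2\lambda\delta\gamma+\delta\gamma]$. Moreover there are real $c_{21},c_{22},c_{23}$ with $\mathbf{w}^{EM}=c_{21}\mathbf{u}=c_{22}\mathbf{v}=c_{23}\mathbf{z}$, where $u_1=x_1[\delta\gamma\lambda^2-2\lambda\delta\gamma+1+2\lambda\gamma-2\gamma+\gamma^2]$, $u_2=\lambda^3\gamma-3\lambda^2\gamma-1+2\gamma-\gamma^2$, $u_3=\frac{x_1}{x_2}\gamma[\lambda\gamma+\lambda^2-2\lambda-\gamma+1+\lambda\delta-\delta+\delta\gamma]$, $u_4=\frac{x_1}{x_3}[\lambda+\lambda^2\gamma-2\lambda\gamma-1+\gamma+\delta+\lambda\delta\gamma-\delta\gamma]$; $v_1=x_2\delta(1+\lambda\gamma-\gamma)(\delta+\lambda-1)$, $v_2=\frac{x_2}{x_1}[1+\lambda\gamma-\gamma+\lambda\delta-\delta+\delta\gamma\lambda^2-2\lambda\delta\gamma+\delta\gamma]$, $v_3=\gamma(\delta\lambda^3-3\delta\lambda^2-1+2\delta-\delta^2)$, $v_4=\frac{x_2}{x_3}[2\lambda\delta\gamma+\delta\lambda^2-2\lambda\delta-2\delta\gamma+\gamma+\delta^2\gamma]$; $z_1=x_3\delta(\lambda\gamma+\lambda^2-2\lambda-\gamma+1+\lambda\delta-\delta+\delta\gamma)$,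 $z_2=\frac{x_3}{x_1}[\gamma+\lambda-1+\delta\lambda^2-2\lambda\delta+\delta+\lambda\delta\gamma-\delta\gamma]$, $z_3=\frac{x_3}{x_2}[2\lambda\delta+\delta\gamma\lambda^2-2\lambda\delta\gamma-2\delta+1+\delta^2]$, $z_4=\delta\lambda^3-3\delta\lambda^2-1+2\delta-\delta^2$. Case 2B ($n\ge5$; matrix $\mathbf{R}$ with entries $x_{j-1}/x_{i-1}$ except $r_{12}=\delta x_1$, $r_{21}=1/(\delta x_1)$, $r_{34}=\gamma x_3/x_2$, $r_{43}=x_2/(\gamma x_3)$). $\mathbf{w}^{EM}$ can be taken as: $w_1=\delta\lambda[\lambda^3\gamma-(n-1)\lambda^2\gamma-(n-3)(\gamma^2-2\gamma+1)]$, $w_2=\frac1{x_1}\{\lambda^3\gamma-(n-2)\lambda^2\gamma+(n-2)\delta\gamma\lambda^2+[\lambda\delta+(n-4)(\delta-1)](\gamma^2-2\gamma+1)\}$, $w_3=\frac{\gamma\lambda}{x_2}[\gamma+\lambda-1+\delta\lambda^2-2\lambda\delta+\delta+\lambda\delta\gamma-\delta\gamma]$, $w_4=\frac{\lambda}{x_3}[1+\lambda\gamma-\gamma+\lambda\delta-\delta+\delta\gamma\lambda^2-2\lambda\delta\gamma+\delta\gamma]$, $w_i=\frac1{x_{i-1}}[\gamma^2-2\gamma+\lambda^2\gamma+1+\lambda\delta-\delta\gamma\lambda^2-2\lambda\delta\gamma+\lambda\gamma^2\delta+\lambda^3\delta\gamma-\delta+2\delta\gamma-\delta\gamma^2]$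 ($i\ge5$). Moreover there are real $c_{31},c_{32},c_{33},c_{34}$ with $\mathbf{w}^{EM}=c_{31}\mathbf{u}=c_{32}\mathbf{v}=c_{33}\mathbf{z}=c_{34}\mathbf{y}$, where $u_1=x_1[\lambda^3\delta\gamma-(n-2)\delta\gamma\lambda^2-(n-4)\delta(\gamma-1)^2+\lambda+(n-2)\lambda^2\gamma-2\lambda\gamma+\lambda\gamma^2+(n-4)(\gamma-1)^2]$, $u_2=\lambda(\lambda^3\gamma-(n-1)\lambda^2\gamma-(n-3)(\gamma-1)^2)$, $u_3=\frac{x_1}{x_2}\gamma\lambda(\lambda\gamma+\lambda^2-2\lambda-\gamma+1+\delta\lambda-\delta+\delta\gamma)$, $u_4=\frac{x_1}{x_3}\lambda(\lambda+\lambda^2\gamma-2\lambda\gamma-1+\gamma+\delta+\lambda\delta\gamma-\delta\gamma)$, $u_i=\frac{x_1}{x_{i-1}}(\lambda\gamma^2-2\lambda\gamma+\lambda^3\gamma+\lambda-\gamma^2+2\gamma-\lambda^2\gamma-1+\delta-2\delta\gamma+\delta\gamma^2+\delta\gamma\lambda^2)$ ($i\ge5$); $v_1=x_2\delta\lambda(1+\lambda\gamma-\gamma)(\delta+\lambda-1)$, $v_2=\frac{x_2}{x_1}\lambda(1+\lambda\gamma-\gamma)(1+\delta\lambda-\delta)$, $v_3=\gamma\lambda[\lambda^3\delta-(n-1)\delta\lambda^2-(n-3)(\delta-1)^2]$, $v_4=\frac{x_2}{x_3}[\delta\lambda^3-(n-2)\delta\lambda^2(1-\gamma)-2\lambda\delta\gamma+2(n-4)\delta(1-\gamma)+\lambda\gamma+\delta^2\lambda\gamma+(n-4)(-1+\gamma-\delta^2+\delta^2\gamma)]$,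 $v_i=\frac{x_2}{x_{i-1}}(1+\lambda\gamma-\gamma)(\delta\lambda^2+1-2\delta+\delta^2)$ ($i\ge5$); $z_1=x_3\delta\lambda(\lambda\gamma+\lambda^2-2\lambda-\gamma+1+\delta\lambda-\delta+\delta\gamma)$, $z_2=\frac{x_3}{x_1}\lambda(\gamma+\lambda-1)(1+\delta\lambda-\delta)$, $z_3=\frac{x_3}{x_2}[\lambda^3\delta\gamma-(n-2)\delta\lambda^2(\gamma-1)-2\delta\lambda+2(n-4)\delta(\gamma-1)+\lambda+\delta^2\lambda+(n-4)(1-\gamma+\delta^2-\delta^2\gamma)]$, $z_4=\lambda[\delta\lambda^3-(n-1)\delta\lambda^2-(n-3)(\delta-1)^2]$, $z_i=\frac{x_3}{x_{i-1}}(\delta\gamma\lambda^2+\lambda^3\delta-\delta\lambda^2-2\delta\lambda-2\delta\gamma+2\delta-1+\gamma+\lambda+\delta^2\lambda-\delta^2+\delta^2\gamma)$ ($i\ge5$); $y_1=x_4\delta\lambda(\gamma^2-2\gamma+\lambda^2\gamma+1)(\delta+\lambda-1)$, $y_2=\frac{x_4}{x_1}\lambda(\gamma^2-2\gamma+\lambda^2\gamma+1)(1+\delta\lambda-\delta)$, $y_3=\frac{x_4}{x_2}\gamma\lambda(\delta\gamma\lambda^2+\lambda^3\delta-\delta\lambda^2-2\delta\lambda-2\delta\gamma+2\delta-1+\gamma+\lambda+\delta^2\lambda-\delta^2+\delta^2\gamma)$, $y_4=\frac{x_4}{x_3}\lambda(\delta\lambda^2+\lambda^3\delta\gamma-\delta\gamma\lambda^2-2\lambda\delta\gamma-2\delta+2\delta\gamma-\gamma+1+\lambda\gamma+\delta^2+\delta^2\lambda\gamma-\delta^2\gamma)$,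 $y_i=\frac{x_4}{x_{i-1}}(\gamma^2-2\gamma+\lambda^2\gamma+1)(\delta\lambda^2+1-2\delta+\delta^2)$ ($i\ge5$).
   Context: The principal right eigenvector of a positive matrix is its Perron eigenvector (positive eigenvector for the largest eigenvalue $\lambda_{\max}$), determined up to a positive scalar multiple. *)

theory Defs
  imports Complex_Main
begin

text \<open>Matrices of size n are represented as functions nat => nat => real, indices 1..n;
vectors as functions nat => real, indices 1..n.\<close>

definition is_eigenvalue :: "nat \<Rightarrow> (nat \<Rightarrow> nat \<Rightarrow> real) \<Rightarrow> complex \<Rightarrow> bool" where
  "is_eigenvalue n A \<mu> \<longleftrightarrow>
     (\<exists>v::nat \<Rightarrow> complex. (\<exists>i\<in>{1..n}. v i \<noteq> 0) \<and>
        (\<forall>i\<in>{1..n}. (\<Sum>j=1..n. complex_of_real (A i j) * v j) = \<mu> * v i))"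

definition perron_eigenvalue :: "nat \<Rightarrow> (nat \<Rightarrow> nat \<Rightarrow> real) \<Rightarrow> real \<Rightarrow> bool" where
  "perron_eigenvalue n A l \<longleftrightarrow>
     is_eigenvalue n A (complex_of_real l) \<and> (\<forall>\<mu>. is_eigenvalue n A \<mu> \<longrightarrow> cmod \<mu> \<le> l)"

definition principal_right_eigenvector :: "nat \<Rightarrow> (nat \<Rightarrow> nat \<Rightarrow> real) \<Rightarrow> (nat \<Rightarrow> real) \<Rightarrow> bool" where
  "principal_right_eigenvector n A w \<longleftrightarrow>
     (\<forall>i\<in>{1..n}. w i > 0) \<and>
     (\<exists>l. perron_eigenvalue n A l \<and> (\<forall>i\<in>{1..n}. (\<Sum>j=1..n. A i j * w j) = l * w i))"

definition P_mat :: "(nat \<Rightarrow> real) \<Rightarrow> real \<Rightarrow> real \<Rightarrow> nat \<Rightarrow> nat \<Rightarrow> real" where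
  "P_mat x g d i j =
     (if i = 1 \<and> j = 2 then d * x 1
      else if i = 2 \<and> j = 1 then 1 / (d * x 1)
      else if i = 1 \<and> j = 3 then g * x 2
      else if i = 3 \<and> j = 1 then 1 / (g * x 2)
      else x (j - 1) / x (i - 1))"

text \<open>Matrix used for both Q (n = 4) and R (n >= 5).\<close>
definition Q_mat :: "(nat \<Rightarrow> real) \<Rightarrow> real \<Rightarrow> real \<Rightarrow> nat \<Rightarrow> nat \<Rightarrow> real" where
  "Q_mat x g d i j =
     (if i = 1 \<and> j = 2 then d * x 1
      else if i = 2 \<and> j = 1 then 1 / (d * x 1)
      else if i = 3 \<and> j = 4 then g * x 3 / x 2
      else if i = 4 \<and> j = 3 then x 2 / (g * x 3)
      else x (j - 1) / x (i - 1))"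

definition c1_w :: "nat \<Rightarrow> (nat \<Rightarrow> real) \<Rightarrow> real \<Rightarrow> real \<Rightarrow> real \<Rightarrow> nat \<Rightarrow> real" where
  "c1_w n x g d l i =
     (if i = 1 then d*g*l*(l - real n + 1)
      else if i = 2 then (1 / x 1) * (g*l - (real n - 2)*g + d + (real n - 3)*d*g)
      else if i = 3 then (1 / x 2) * (d*l - (real n - 2)*d + g + (real n - 3)*d*g)
      else (1 / x (i - 1)) * (g + d + d*g*l - 2*d*g))"

definition c1_u :: "nat \<Rightarrow> (nat \<Rightarrow> real) \<Rightarrow> real \<Rightarrow> real \<Rightarrow> real \<Rightarrow> nat \<Rightarrow> real" where
  "c1_u n x g d l i =
     (if i = 1 then x 1 * g * l * (d*l - (real n - 2)*d + g + real n - 3)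
      else if i = 2 then g*l^3 - (real n - 1)*g*l^2 - (real n - 3)*(g^2 - 2*g + 1)
      else if i = 3 then (x 1 / x 2) * (g*l^2 - g*l + d*l + (real n - 3)*(d*g - d - g + 1))
      else (x 1 / x (i - 1)) * (g*l^2 - g*l - g + d + d*g*l - d*g + g^2))"

definition c1_v :: "nat \<Rightarrow> (nat \<Rightarrow> real) \<Rightarrow> real \<Rightarrow> real \<Rightarrow> real \<Rightarrow> nat \<Rightarrow> real" where
  "c1_v n x g d l i =
     (if i = 1 then x 2 * d * l * (d + g*l - (real n - 2)*g + real n - 3)
      else if i = 2 then (x 2 / x 1) * (d*l^2 - d*l + g*l + (real n - 3)*(d*g - d - g + 1))
      else if i = 3 then d*l^3 - (real n - 1)*d*l^2 - (real n - 3)*(d^2 - 2*d + 1)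
      else (x 2 / x (i - 1)) * (d*l^2 - d*l + g - d + d^2 + d*g*l - d*g))"

definition c1_z :: "nat \<Rightarrow> (nat \<Rightarrow> real) \<Rightarrow> real \<Rightarrow> real \<Rightarrow> real \<Rightarrow> nat \<Rightarrow> real" where
  "c1_z n x g d l i =
     (if i = 1 then x 3 * d * g * l * (d + g + l - 2)
      else if i = 2 then (x 3 / x 1) * (d*g*l^2 - d*g*l + g^2 + g*l - g - d*g + d)
      else if i = 3 then (x 3 / x 2) * (d*g*l^2 - d*g*l - d*g + g + d^2 + d*l - d)
      else (x 3 / x (i - 1)) * (d*g*l^2 - 4*d*g + g + d + d^2*g + g^2*d))"

definition c2a_w :: "(nat \<Rightarrow> real) \<Rightarrow> real \<Rightarrow> real \<Rightarrow> real \<Rightarrow> nat \<Rightarrow> real" where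
  "c2a_w x g d l i =
     (if i = 1 then d * (l^3*g - 3*l^2*g - 1 + 2*g - g^2)
      else if i = 2 then (1 / x 1) * (l^2*g - 2*l*g + d + 2*l*d*g - 2*d*g + d*g^2)
      else if i = 3 then (g / x 2) * (g + l - 1 + d*l^2 - 2*l*d + d + l*d*g - d*g)
      else (1 / x 3) * (1 + l*g - g + l*d - d + d*g*l^2 - 2*l*d*g + d*g))"

definition c2a_u :: "(nat \<Rightarrow> real) \<Rightarrow> real \<Rightarrow> real \<Rightarrow> real \<Rightarrow> nat \<Rightarrow> real" where
  "c2a_u x g d l i =
     (if i = 1 then x 1 * (d*g*l^2 - 2*l*d*g + 1 + 2*l*g - 2*g + g^2)
      else if i = 2 then l^3*g - 3*l^2*g - 1 + 2*g - g^2
      else if i = 3 then (x 1 / x 2) * g * (l*g + l^2 - 2*l - g + 1 + l*d - d + d*g)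
      else (x 1 / x 3) * (l + l^2*g - 2*l*g - 1 + g + d + l*d*g - d*g))"

definition c2a_v :: "(nat \<Rightarrow> real) \<Rightarrow> real \<Rightarrow> real \<Rightarrow> real \<Rightarrow> nat \<Rightarrow> real" where
  "c2a_v x g d l i =
     (if i = 1 then x 2 * d * (1 + l*g - g) * (d + l - 1)
      else if i = 2 then (x 2 / x 1) * (1 + l*g - g + l*d - d + d*g*l^2 - 2*l*d*g + d*g)
      else if i = 3 then g * (d*l^3 - 3*d*l^2 - 1 + 2*d - d^2)
      else (x 2 / x 3) * (2*l*d*g + d*l^2 - 2*l*d - 2*d*g + g + d^2*g))"

definition c2a_z :: "(nat \<Rightarrow> real) \<Rightarrow> real \<Rightarrow> real \<Rightarrow> real \<Rightarrow> nat \<Rightarrow> real" where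
  "c2a_z x g d l i =
     (if i = 1 then x 3 * d * (l*g + l^2 - 2*l - g + 1 + l*d - d + d*g)
      else if i = 2 then (x 3 / x 1) * (g + l - 1 + d*l^2 - 2*l*d + d + l*d*g - d*g)
      else if i = 3 then (x 3 / x 2) * (2*l*d + d*g*l^2 - 2*l*d*g - 2*d + 1 + d^2)
      else d*l^3 - 3*d*l^2 - 1 + 2*d - d^2)"

definition c2b_w :: "nat \<Rightarrow> (nat \<Rightarrow> real) \<Rightarrow> real \<Rightarrow> real \<Rightarrow> real \<Rightarrow> nat \<Rightarrow> real" where
  "c2b_w n x g d l i =
     (if i = 1 then d*l*(l^3*g - (real n - 1)*l^2*g - (real n - 3)*(g^2 - 2*g + 1))
      else if i = 2 then (1 / x 1) * (l^3*g - (real n - 2)*l^2*g + (real n - 2)*d*g*l^2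
                                      + (l*d + (real n - 4)*(d - 1))*(g^2 - 2*g + 1))
      else if i = 3 then (g*l / x 2) * (g + l - 1 + d*l^2 - 2*l*d + d + l*d*g - d*g)
      else if i = 4 then (l / x 3) * (1 + l*g - g + l*d - d + d*g*l^2 - 2*l*d*g + d*g)
      else (1 / x (i - 1)) * (g^2 - 2*g + l^2*g + 1 + l*d - d*g*l^2 - 2*l*d*g + l*g^2*d
                              + l^3*d*g - d + 2*d*g - d*g^2))"

definition c2b_u :: "nat \<Rightarrow> (nat \<Rightarrow> real) \<Rightarrow> real \<Rightarrow> real \<Rightarrow> real \<Rightarrow> nat \<Rightarrow> real" where
  "c2b_u n x g d l i =
     (if i = 1 then x 1 * (l^3*d*g - (real n - 2)*d*g*l^2 - (real n - 4)*d*(g - 1)^2 + l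
                           + (real n - 2)*l^2*g - 2*l*g + l*g^2 + (real n - 4)*(g - 1)^2)
      else if i = 2 then l * (l^3*g - (real n - 1)*l^2*g - (real n - 3)*(g - 1)^2)
      else if i = 3 then (x 1 / x 2) * g * l * (l*g + l^2 - 2*l - g + 1 + d*l - d + d*g)
      else if i = 4 then (x 1 / x 3) * l * (l + l^2*g - 2*l*g - 1 + g + d + l*d*g - d*g)
      else (x 1 / x (i - 1)) * (l*g^2 - 2*l*g + l^3*g + l - g^2 + 2*g - l^2*g - 1 + d
                                - 2*d*g + d*g^2 + d*g*l^2))"

definition c2b_v :: "nat \<Rightarrow> (nat \<Rightarrow> real) \<Rightarrow> real \<Rightarrow> real \<Rightarrow> real \<Rightarrow> nat \<Rightarrow> real" where
  "c2b_v n x g d l i =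
     (if i = 1 then x 2 * d * l * (1 + l*g - g) * (d + l - 1)
      else if i = 2 then (x 2 / x 1) * l * (1 + l*g - g) * (1 + d*l - d)
      else if i = 3 then g * l * (l^3*d - (real n - 1)*d*l^2 - (real n - 3)*(d - 1)^2)
      else if i = 4 then (x 2 / x 3) * (d*l^3 - (real n - 2)*d*l^2*(1 - g) - 2*l*d*g
                                        + 2*(real n - 4)*d*(1 - g) + l*g + d^2*l*g
                                        + (real n - 4)*(-1 + g - d^2 + d^2*g))
      else (x 2 / x (i - 1)) * (1 + l*g - g) * (d*l^2 + 1 - 2*d + d^2))"

definition c2b_z :: "nat \<Rightarrow> (nat \<Rightarrow> real) \<Rightarrow> real \<Rightarrow> real \<Rightarrow> real \<Rightarrow> nat \<Rightarrow> real" where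
  "c2b_z n x g d l i =
     (if i = 1 then x 3 * d * l * (l*g + l^2 - 2*l - g + 1 + d*l - d + d*g)
      else if i = 2 then (x 3 / x 1) * l * (g + l - 1) * (1 + d*l - d)
      else if i = 3 then (x 3 / x 2) * (l^3*d*g - (real n - 2)*d*l^2*(g - 1) - 2*d*l
                                        + 2*(real n - 4)*d*(g - 1) + l + d^2*l
                                        + (real n - 4)*(1 - g + d^2 - d^2*g))
      else if i = 4 then l * (d*l^3 - (real n - 1)*d*l^2 - (real n - 3)*(d - 1)^2)
      else (x 3 / x (i - 1)) * (d*g*l^2 + l^3*d - d*l^2 - 2*d*l - 2*d*g + 2*d - 1 + g + l
                                + d^2*l - d^2 + d^2*g))"

definition c2b_y :: "nat \<Rightarrow> (nat \<Rightarrow> real) \<Rightarrow> real \<Rightarrow> real \<Rightarrow> real \<Rightarrow> nat \<Rightarrow> real" where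
  "c2b_y n x g d l i =
     (if i = 1 then x 4 * d * l * (g^2 - 2*g + l^2*g + 1) * (d + l - 1)
      else if i = 2 then (x 4 / x 1) * l * (g^2 - 2*g + l^2*g + 1) * (1 + d*l - d)
      else if i = 3 then (x 4 / x 2) * g * l * (d*g*l^2 + l^3*d - d*l^2 - 2*d*l - 2*d*g + 2*d
                                                - 1 + g + l + d^2*l - d^2 + d^2*g)
      else if i = 4 then (x 4 / x 3) * l * (d*l^2 + l^3*d*g - d*g*l^2 - 2*l*d*g - 2*d + 2*d*g
                                            - g + 1 + l*g + d^2 + d^2*l*g - d^2*g)
      else (x 4 / x (i - 1)) * (g^2 - 2*g + l^2*g + 1) * (d*l^2 + 1 - 2*d + d^2))"

end

theory Submission
  imports Defs
begin

text \<open>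
  Each of the matrices is diagonally similar, via \<open>diag (x 0, \<dots>, x (n - 1))\<close>, to a matrix whose rows
  and columns of index at least \<open>K\<close> coincide (\<open>K = 4\<close> for \<open>P\<close> and for \<open>Q\<close> with \<open>n = 4\<close>,
  \<open>K = 5\<close> for \<open>R\<close>). So for a nonzero eigenvalue every eigenvector is, after rescaling, constant
  on those indices, and the eigenproblem reduces to a \<open>K \<times> K\<close> system whose last column has
  multiplicity \<open>n - K + 1\<close>. This system has a nonzero solution only at roots of an explicit
  polynomial \<open>h\<close>; since \<open>h(2) < 0\<close> and \<open>h\<close> has positive leading coefficient, some root
  \<open>r \<ge> 2\<close> is an eigenvalue of the full matrix; hence the Perron eigenvalue \<open>\<lambda>\<close> satisfies
  \<open>\<lambda> \<ge> r \<ge> 2\<close> and, being an eigenvalue of the reduced system, \<open>h(\<lambda>) = 0\<close>.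
  At a root of \<open>h\<close> the closed form \<open>w\<close> solves the reduced system, and all \<open>2 \<times> 2\<close> minors
  formed from \<open>w\<close> and \<open>u\<close>, \<open>v\<close>, \<open>z\<close> (and \<open>y\<close>) lie in the ideal generated by \<open>h\<close>, so these
  vectors are proportional. For \<open>\<lambda> \<ge> 2\<close> enough of their entries are visibly positive to make
  \<open>w\<close> positive.
\<close>

section \<open>Aggregated eigenproblems\<close>

text \<open>Row \<open>k\<close> of the \<open>K \<times> K\<close> system obtained by merging the indices \<open>K, \<dots>, n\<close> of a matrix
  whose rows and columns agree beyond \<open>K\<close>, and the vector on \<open>{1..n}\<close> that a solution \<open>W\<close>
  of it induces after undoing the diagonal similarity by \<open>x (i - 1)\<close>.\<close>

definition aggregated_row ::
    "nat \<Rightarrow> nat \<Rightarrow> (nat \<Rightarrow> nat \<Rightarrow> real) \<Rightarrow> (nat \<Rightarrow> real) \<Rightarrow> nat \<Rightarrow> real" where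
  "aggregated_row n K B W k = (\<Sum>m=1..K-1. B k m * W m) + real (n - K + 1) * B k K * W K"

definition expand_vector :: "nat \<Rightarrow> (nat \<Rightarrow> real) \<Rightarrow> (nat \<Rightarrow> real) \<Rightarrow> nat \<Rightarrow> real" where
  "expand_vector K x W i = W (min i K) / x (i - 1)"

text \<open>With \<open>simp only\<close>, these evaluate the index tests in the closed forms without the
  cancellations of full \<open>simp\<close>, which would turn the polynomial identities into disjunctions
  that \<open>algebra\<close> cannot use.\<close>

lemma index_neqs:
  "(2::nat) \<noteq> 1" "(3::nat) \<noteq> 1" "(4::nat) \<noteq> 1" "(5::nat) \<noteq> 1" "(3::nat) \<noteq> 2"
  "(4::nat) \<noteq> 2" "(5::nat) \<noteq> 2" "(4::nat) \<noteq> 3" "(5::nat) \<noteq> 3" "(5::nat) \<noteq> 4"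
  by simp_all

lemma ball_atLeastAtMost_1_4: "(\<forall>k\<in>{1..4::nat}. P k) \<longleftrightarrow> P 1 \<and> P 2 \<and> P 3 \<and> P 4"
proof -
  have "{1..4::nat} = {1, 2, 3, 4}" by auto
  then show ?thesis by simp
qed

lemma ball_atLeastAtMost_1_5: "(\<forall>k\<in>{1..5::nat}. P k) \<longleftrightarrow> P 1 \<and> P 2 \<and> P 3 \<and> P 4 \<and> P 5"
proof -
  have "{1..5::nat} = {1, 2, 3, 4, 5}" by auto
  then show ?thesis by simp
qed

lemma sum_min_split:
  fixes F :: "nat \<Rightarrow> real"
  assumes "1 \<le> K" "K \<le> n"
  shows "(\<Sum>j=1..n. F (min j K)) = (\<Sum>j=1..K-1. F j) + real (n - K + 1) * F K"
proof -
  have "{1..n} = {1..K-1} \<union> {K..n}" using assms by auto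
  then have "(\<Sum>j=1..n. F (min j K)) = (\<Sum>j=1..K-1. F (min j K)) + (\<Sum>j=K..n. F (min j K))"
    by (simp add: sum.union_disjoint)
  also have "(\<Sum>j=1..K-1. F (min j K)) = (\<Sum>j=1..K-1. F j)"
    by (rule sum.cong) auto
  also have "(\<Sum>j=K..n. F (min j K)) = real (n - K + 1) * F K"
    using assms by simp
  finally show ?thesis .
qed

lemma aggregated_row_4:
  "n \<ge> 4 \<Longrightarrow> aggregated_row n 4 B W k
    = B k 1 * W 1 + B k 2 * W 2 + B k 3 * W 3 + (real n - 3) * B k 4 * W 4"
  by (simp add: aggregated_row_def eval_nat_numeral of_nat_diff)

lemma aggregated_row_5:
  "n \<ge> 5 \<Longrightarrow> aggregated_row n 5 B W k
    = B k 1 * W 1 + B k 2 * W 2 + B k 3 * W 3 + B k 4 * W 4 + (real n - 4) * B k 5 * W 5"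
  by (simp add: aggregated_row_def eval_nat_numeral of_nat_diff)

lemma sum_factored_matrix:
  assumes A: "\<forall>i\<in>{1..n}. \<forall>j\<in>{1..n}. A i j = x (j - 1) / x (i - 1) * B (min i K) (min j K)"
    and x: "\<forall>j\<in>{1..n}. x (j - 1) \<noteq> 0" and K: "1 \<le> K" "K \<le> n" and i: "i \<in> {1..n}"
    and V: "\<forall>j\<in>{1..n}. V j = V (min j K)"
  shows "(\<Sum>j=1..n. A i j * (V j / x (j - 1))) = aggregated_row n K B V (min i K) / x (i - 1)"
proof -
  have "(\<Sum>j=1..n. A i j * (V j / x (j - 1)))
      = (\<Sum>j=1..n. (\<lambda>m. B (min i K) m * V m) (min j K)) / x (i - 1)"
    unfolding sum_divide_distrib by (rule sum.cong) (use A x V i in auto)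
  also have "\<dots> = aggregated_row n K B V (min i K) / x (i - 1)"
    using sum_min_split[OF K, of "\<lambda>m. B (min i K) m * V m"]
    by (simp add: aggregated_row_def mult.assoc)
  finally show ?thesis .
qed

lemma eigenvector_expand_vector:
  assumes A: "\<forall>i\<in>{1..n}. \<forall>j\<in>{1..n}. A i j = x (j - 1) / x (i - 1) * B (min i K) (min j K)"
    and x: "\<forall>j\<in>{1..n}. x (j - 1) \<noteq> 0" and K: "1 \<le> K" "K \<le> n"
    and W: "\<forall>k\<in>{1..K}. aggregated_row n K B W k = l * W k"
    and w: "\<forall>i\<in>{1..n}. w i = expand_vector K x W i"
  shows "\<forall>i\<in>{1..n}. (\<Sum>j=1..n. A i j * w j) = l * w i"
proof
  fix i assume i: "i \<in> {1..n}"
  have "(\<Sum>m=1..K-1. B k m * W (min m K)) = (\<Sum>m=1..K-1. B k m * W m)" for k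
    by (rule sum.cong) auto
  then have "aggregated_row n K B (\<lambda>j. W (min j K)) = aggregated_row n K B W"
    by (simp add: aggregated_row_def fun_eq_iff)
  moreover have "(\<Sum>j=1..n. A i j * w j) = (\<Sum>j=1..n. A i j * (W (min j K) / x (j - 1)))"
    using w by (intro sum.cong) (auto simp: expand_vector_def)
  ultimately have "(\<Sum>j=1..n. A i j * w j) = aggregated_row n K B W (min i K) / x (i - 1)"
    using sum_factored_matrix[OF A x K i, of "\<lambda>j. W (min j K)"] by simp
  also have "\<dots> = l * w i"
    using W w i K by (simp add: expand_vector_def)
  finally show "(\<Sum>j=1..n. A i j * w j) = l * w i" .
qed

text \<open>For a nonzero eigenvalue, the rows of index \<open>\<ge> K\<close> of the similar matrix coincide, so every
  eigenvector is, after scaling by \<open>x\<close>, constant on those indices.\<close>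

lemma aggregated_eigenvector_of_eigenvector:
  assumes A: "\<forall>i\<in>{1..n}. \<forall>j\<in>{1..n}. A i j = x (j - 1) / x (i - 1) * B (min i K) (min j K)"
    and x: "\<forall>j\<in>{1..n}. x (j - 1) \<noteq> 0" and K: "1 \<le> K" "K \<le> n"
    and u: "\<forall>i\<in>{1..n}. (\<Sum>j=1..n. A i j * u j) = l * u i" "\<exists>i\<in>{1..n}. u i \<noteq> 0"
    and l: "l \<noteq> 0"
  shows "\<exists>V. (\<forall>k\<in>{1..K}. aggregated_row n K B V k = l * V k) \<and> (\<exists>k\<in>{1..K}. V k \<noteq> 0)"
proof -
  define V where "V j = x (j - 1) * u j" for j
  have u_V: "u j = V j / x (j - 1)" if "j \<in> {1..n}" for j
    using x that by (simp add: V_def)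
  have row: "l * V i = (\<Sum>j=1..n. B (min i K) (min j K) * V j)" if i: "i \<in> {1..n}" for i
  proof -
    have "(\<Sum>j=1..n. A i j * u j) = (\<Sum>j=1..n. B (min i K) (min j K) * V j) / x (i - 1)"
      unfolding sum_divide_distrib by (rule sum.cong) (use A x i in \<open>auto simp: V_def\<close>)
    with u(1) i have "l * u i = (\<Sum>j=1..n. B (min i K) (min j K) * V j) / x (i - 1)" by simp
    then show ?thesis using x i by (simp add: V_def field_simps)
  qed
  have V_min: "\<forall>j\<in>{1..n}. V j = V (min j K)"
  proof
    fix j assume "j \<in> {1..n}"
    then have "l * V j = l * V (min j K)" using row[of j] row[of "min j K"] K by simp
    then show "V j = V (min j K)" using l by simp
  qed
  have "aggregated_row n K B V k = l * V k" if k: "k \<in> {1..K}" for k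
  proof -
    have "aggregated_row n K B V k / x (k - 1) = (\<Sum>j=1..n. A k j * (V j / x (j - 1)))"
      using sum_factored_matrix[OF A x K _ V_min, of k] k K by simp
    also have "\<dots> = (\<Sum>j=1..n. A k j * u j)"
      using u_V by (intro sum.cong) auto
    also have "\<dots> = l * V k / x (k - 1)"
      using u(1) u_V k K by simp
    finally show ?thesis using x k K by (simp add: field_simps)
  qed
  moreover obtain i where i: "i \<in> {1..n}" "u i \<noteq> 0" using u(2) by blast
  then have "V i \<noteq> 0" using x by (simp add: V_def)
  then have "V (min i K) \<noteq> 0" "min i K \<in> {1..K}"
    using V_min[rule_format, OF i(1)] i(1) K by auto
  ultimately show ?thesis by blast
qed

text \<open>The real or the imaginary part of a complex eigenvector is a real eigenvector.\<close>

lemma real_eigenvector_of_eigenvalue: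
  assumes "is_eigenvalue n A (complex_of_real l)"
  shows "\<exists>u. (\<forall>i\<in>{1..n}. (\<Sum>j=1..n. A i j * u j) = l * u i) \<and> (\<exists>i\<in>{1..n}. u i \<noteq> 0)"
proof -
  obtain v i where v: "\<forall>i\<in>{1..n}. (\<Sum>j=1..n. complex_of_real (A i j) * v j) = complex_of_real l * v i"
    and i: "i \<in> {1..n}" "v i \<noteq> 0"
    using assms unfolding is_eigenvalue_def by blast
  have Re: "(\<Sum>j=1..n. A k j * Re (v j)) = l * Re (v k)"
    and Im: "(\<Sum>j=1..n. A k j * Im (v j)) = l * Im (v k)" if "k \<in> {1..n}" for k
    using arg_cong[OF v[rule_format, OF that], of Re] arg_cong[OF v[rule_format, OF that], of Im]
    by (simp_all add: Re_sum Im_sum)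
  show ?thesis
  proof (cases "Re (v i) = 0")
    case True
    with i(2) have "Im (v i) \<noteq> 0" using complex_eqI[of "v i" 0] by auto
    with Im i(1) show ?thesis by (intro exI[of _ "\<lambda>j. Im (v j)"]) auto
  next
    case False
    with Re i(1) show ?thesis by (intro exI[of _ "\<lambda>j. Re (v j)"]) auto
  qed
qed

lemma is_eigenvalue_of_real_eigenvector:
  assumes "\<forall>i\<in>{1..n}. (\<Sum>j=1..n. A i j * u j) = l * u i" "i \<in> {1..n}" "u i \<noteq> 0"
  shows "is_eigenvalue n A (complex_of_real l)"
  unfolding is_eigenvalue_def
proof (intro exI conjI)
  show "\<exists>i\<in>{1..n}. complex_of_real (u i) \<noteq> 0" using assms(2,3) by auto
  show "\<forall>i\<in>{1..n}. (\<Sum>j=1..n. complex_of_real (A i j) * complex_of_real (u j))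
      = complex_of_real l * complex_of_real (u i)"
    using assms(1) by (simp flip: of_real_mult of_real_sum)
qed

lemma real_root_above:
  fixes p :: "real \<Rightarrow> real"
  assumes p: "\<And>t. p t = a * t ^ k * (t - N) + b * t\<^sup>2 + b' * t + c"
    and a: "a > 0" and k: "k \<ge> 2" and t0: "t0 \<ge> 1" "p t0 < 0"
  shows "\<exists>r\<ge>t0. p r = 0"
proof -
  define S where "S = \<bar>b\<bar> + \<bar>b'\<bar> + \<bar>c\<bar>"
  define T where "T = max t0 N + 1 + S / a"
  have S: "S \<ge> 0" "S / a \<ge> 0" using a by (simp_all add: S_def)
  have T: "T \<ge> 1" "T \<ge> t0" "T - N \<ge> 1 + S / a" using t0 S unfolding T_def by auto
  have T2: "T \<le> T\<^sup>2" "1 \<le> T\<^sup>2" "T\<^sup>2 \<le> T ^ k"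
    using power_increasing[of 1 2 T] one_le_power[of T 2] power_increasing[OF k, of T] T(1) by simp_all
  have "\<bar>b * T\<^sup>2 + b' * T + c\<bar> \<le> \<bar>b\<bar> * T\<^sup>2 + \<bar>b'\<bar> * T + \<bar>c\<bar>"
    using T by (simp add: abs_mult abs_triangle_ineq4 order_trans[OF abs_triangle_ineq] add_mono)
  also have "\<dots> \<le> S * T\<^sup>2"
    using T2 mult_left_mono[OF T2(1), of "\<bar>b'\<bar>"] mult_left_mono[OF T2(2), of "\<bar>c\<bar>"]
    by (simp add: S_def algebra_simps)
  finally have lower: "b * T\<^sup>2 + b' * T + c \<ge> - (S * T\<^sup>2)" by linarith
  have "a * T ^ k * (T - N) \<ge> a * T\<^sup>2 * (1 + S / a)"
    using T T2 a S by (intro mult_mono) auto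
  also have "a * T\<^sup>2 * (1 + S / a) = a * T\<^sup>2 + S * T\<^sup>2" using a by (simp add: field_simps)
  finally have upper: "a * T ^ k * (T - N) \<ge> a * T\<^sup>2 + S * T\<^sup>2" .
  have "a * T\<^sup>2 > 0" using a T(1) by simp
  then have "p T > 0" using p[of T] lower upper by linarith
  moreover have "continuous_on {t0..T} p"
    unfolding p by (intro continuous_intros)
  ultimately have "\<exists>r\<ge>t0. r \<le> T \<and> p r = 0"
    using IVT'[of p t0 0 T] t0 T by auto
  then show ?thesis by blast
qed

lemma perron_eigenvalue_aggregated:
  assumes A: "\<forall>i\<in>{1..n}. \<forall>j\<in>{1..n}. A i j = x (j - 1) / x (i - 1) * B (min i K) (min j K)"
    and x: "\<forall>j\<in>{1..n}. x (j - 1) \<noteq> 0" and K: "1 \<le> K" "K \<le> n"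
    and W: "\<forall>k\<in>{1..K}. aggregated_row n K B W k = r * W k" "k0 \<in> {1..K}" "W k0 \<noteq> 0"
    and r: "r > 0" and perron: "perron_eigenvalue n A l"
  shows "r \<le> l" and "\<exists>V. (\<forall>k\<in>{1..K}. aggregated_row n K B V k = l * V k) \<and> (\<exists>k\<in>{1..K}. V k \<noteq> 0)"
proof -
  have "x (k0 - 1) \<noteq> 0" "k0 \<in> {1..n}" using x W(2) K by auto
  with W(2,3) have "expand_vector K x W k0 \<noteq> 0" "k0 \<in> {1..n}" by (simp_all add: expand_vector_def)
  then have "is_eigenvalue n A (complex_of_real r)"
    using is_eigenvalue_of_real_eigenvector[OF eigenvector_expand_vector[OF A x K W(1)]] by auto
  with perron show "r \<le> l" unfolding perron_eigenvalue_def by force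
  with r have "l \<noteq> 0" by simp
  obtain u where "\<forall>i\<in>{1..n}. (\<Sum>j=1..n. A i j * u j) = l * u i" "\<exists>i\<in>{1..n}. u i \<noteq> 0"
    using perron real_eigenvector_of_eigenvalue unfolding perron_eigenvalue_def by blast
  from aggregated_eigenvector_of_eigenvector[OF A x K this \<open>l \<noteq> 0\<close>]
  show "\<exists>V. (\<forall>k\<in>{1..K}. aggregated_row n K B V k = l * V k) \<and> (\<exists>k\<in>{1..K}. V k \<noteq> 0)" .
qed

lemma proportional_of_minors:
  assumes w: "\<forall>i\<in>{1..n}. w i = expand_vector K x W i"
    and u: "\<forall>i\<in>{1..n}. u i = s * expand_vector K x U i"
    and minors: "\<forall>k\<in>{1..K}. W k * U k0 = W k0 * U k"
    and "U k0 \<noteq> 0" "s \<noteq> 0" "1 \<le> K"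
  shows "\<exists>c. \<forall>i\<in>{1..n}. w i = c * u i"
proof (intro exI ballI)
  fix i :: nat assume i: "i \<in> {1..n}"
  then have "W (min i K) = W k0 / U k0 * U (min i K)"
    using minors \<open>U k0 \<noteq> 0\<close> \<open>1 \<le> K\<close> by (simp add: field_simps)
  then show "w i = W k0 / (s * U k0) * u i"
    using w u i \<open>s \<noteq> 0\<close> by (simp add: expand_vector_def)
qed

lemma pos_of_proportional:
  fixes w u :: "nat \<Rightarrow> real"
  assumes "\<forall>i\<in>S. w i = c * u i" "i0 \<in> S" "w i0 > 0" "u i0 > 0" "i \<in> S" "u i > 0"
  shows "w i > 0"
proof -
  have "c > 0" using assms(1-4) by (metis zero_less_mult_pos2)
  then show ?thesis using assms(1,5,6) by simp
qed

section \<open>Case 1: the matrix \<open>P\<close>\<close>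

definition P_kernel :: "real \<Rightarrow> real \<Rightarrow> nat \<Rightarrow> nat \<Rightarrow> real" where
  "P_kernel g d k m =
     (if k = 1 \<and> m = 2 then d else if k = 2 \<and> m = 1 then 1 / d
      else if k = 1 \<and> m = 3 then g else if k = 3 \<and> m = 1 then 1 / g else 1)"

lemma P_mat_factor:
  assumes "x 0 = 1"
  shows "\<forall>i\<in>{1..n}. \<forall>j\<in>{1..n}. P_mat x g d i j = x (j - 1) / x (i - 1) * P_kernel g d (min i 4) (min j 4)"
  using assms by (auto simp: P_mat_def P_kernel_def min_def)

text \<open>Rows 2 and 3 are multiplied by \<open>d\<close> and \<open>g\<close> to clear denominators.\<close>

lemma P_aggregated_iff:
  assumes "n \<ge> 4" "d > 0" "g > 0"
  shows "(\<forall>k\<in>{1..4}. aggregated_row n 4 (P_kernel g d) W k = l * W k) \<longleftrightarrow>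
    W 1 + d * W 2 + g * W 3 + (real n - 3) * W 4 = l * W 1 \<and>
    W 1 + d * W 2 + d * W 3 + d * (real n - 3) * W 4 = d * l * W 2 \<and>
    W 1 + g * W 2 + g * W 3 + g * (real n - 3) * W 4 = g * l * W 3 \<and>
    W 1 + W 2 + W 3 + (real n - 3) * W 4 = l * W 4"
  unfolding ball_atLeastAtMost_1_4 using assms
  by (auto simp: aggregated_row_4 P_kernel_def field_simps)

text \<open>\<open>d g \<lambda>\<inverse> det (\<lambda> I - M)\<close> for the aggregated matrix \<open>M\<close>; likewise \<open>Q4_charpoly\<close> and
  \<open>Q5_charpoly\<close> below are \<open>d g det (\<lambda> I - M)\<close>.\<close>

definition P_charpoly :: "real \<Rightarrow> real \<Rightarrow> real \<Rightarrow> real \<Rightarrow> real" where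
  "P_charpoly N g d l = l^3*d*g - l^2*d*g*N - d^2*g*N + 3*d^2*g - d^2 - d*g^2*N + 3*d*g^2
     + 4*d*g*N - 10*d*g - d*N + 3*d - g^2 - g*N + 3*g"

lemma P_charpoly_eq_zero:
  assumes "n \<ge> 4" "d > 0" "g > 0" "l \<noteq> 0"
    and "\<forall>k\<in>{1..4}. aggregated_row n 4 (P_kernel g d) V k = l * V k" "\<exists>k\<in>{1..4}. V k \<noteq> 0"
  shows "P_charpoly (real n) g d l = 0"
proof -
  have "V 1 + d * V 2 + g * V 3 + (real n - 3) * V 4 = l * V 1"
    "V 1 + d * V 2 + d * V 3 + d * (real n - 3) * V 4 = d * l * V 2"
    "V 1 + g * V 2 + g * V 3 + g * (real n - 3) * V 4 = g * l * V 3"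
    "V 1 + V 2 + V 3 + (real n - 3) * V 4 = l * V 4"
    using assms(5) unfolding P_aggregated_iff[OF assms(1-3)] by auto
  then have "\<forall>k\<in>{1..4}. l * P_charpoly (real n) g d l * V k = 0"
    unfolding ball_atLeastAtMost_1_4 P_charpoly_def by (intro conjI; algebra)
  with assms(4,6) show ?thesis by auto
qed

lemma P_aggregated_solution:
  assumes "n \<ge> 4" "d > 0" "g > 0" "P_charpoly (real n) g d l = 0"
  shows "\<forall>k\<in>{1..4}. aggregated_row n 4 (P_kernel g d) (c1_w n (\<lambda>_. 1) g d l) k = l * c1_w n (\<lambda>_. 1) g d l k"
  using assms(4) unfolding P_aggregated_iff[OF assms(1-3)] c1_w_def P_charpoly_def
  by (simp only: index_neqs if_True if_False simp_thms div_by_1 mult_1; intro conjI;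
      (algebra | simp add: algebra_simps power2_eq_square power3_eq_cube))

lemma P_minors:
  assumes "P_charpoly (real n) g d l = 0"
  defines "W \<equiv> c1_w n (\<lambda>_. 1) g d l"
  shows "\<forall>k\<in>{1..4}. W k * c1_u n (\<lambda>_. 1) g d l 4 = W 4 * c1_u n (\<lambda>_. 1) g d l k"
    and "\<forall>k\<in>{1..4}. W k * c1_v n (\<lambda>_. 1) g d l 4 = W 4 * c1_v n (\<lambda>_. 1) g d l k"
    and "\<forall>k\<in>{1..4}. W k * c1_z n (\<lambda>_. 1) g d l 4 = W 4 * c1_z n (\<lambda>_. 1) g d l k"
  using assms(1) unfolding ball_atLeastAtMost_1_4 W_def c1_w_def c1_u_def c1_v_def c1_z_def P_charpoly_def
  by (simp only: index_neqs if_True if_False simp_thms div_by_1 mult_1; intro conjI;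
      (algebra | simp add: algebra_simps power2_eq_square power3_eq_cube))+

lemma P_charpoly_root:
  assumes "n \<ge> 4" "d > 0" "g > 0"
  shows "\<exists>r\<ge>2. P_charpoly (real n) g d r = 0"
proof (rule real_root_above)
  show "P_charpoly (real n) g d t
      = (d * g) * t ^ 2 * (t - real n) + 0 * t\<^sup>2 + 0 * t + P_charpoly (real n) g d 0" for t
    by (simp add: P_charpoly_def power2_eq_square power3_eq_cube algebra_simps)
  have "P_charpoly (real n) g d 2 = - ((real n - 3) * (d\<^sup>2 * g + d * g\<^sup>2 + d + g)) - (d + g)\<^sup>2"
    by (simp add: P_charpoly_def algebra_simps power2_eq_square)
  moreover have "(real n - 3) * (d\<^sup>2 * g + d * g\<^sup>2 + d + g) > 0"
    using assms by (intro mult_pos_pos) (auto intro!: add_pos_pos)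
  ultimately show "P_charpoly (real n) g d 2 < 0"
    by (smt (verit) zero_le_power2)
qed (use assms in auto)

lemma P_reduced_pos:
  assumes "l \<ge> 2" "d > 0" "g > 0"
  shows "c1_w n (\<lambda>_. 1) g d l 4 > 0" "c1_u n (\<lambda>_. 1) g d l 4 > 0" "c1_v n (\<lambda>_. 1) g d l 4 > 0"
    and "\<forall>k\<in>{1..4}. c1_z n (\<lambda>_. 1) g d l k > 0"
proof -
  have "2 * l \<le> l * l" using assms(1) by (simp add: mult_right_mono)
  then have l: "l - 1 \<ge> 1" "l\<^sup>2 - l - 1 \<ge> 1" "l\<^sup>2 - 4 \<ge> 0"
    using assms(1) unfolding power2_eq_square by linarith+
  have dg: "d * g > 0" using assms by simp
  have "c1_w n (\<lambda>_. 1) g d l 4 = g + d + d * g * (l - 2)"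
    by (simp add: c1_w_def algebra_simps)
  then show "c1_w n (\<lambda>_. 1) g d l 4 > 0"
    using assms dg by (smt (verit) mult_nonneg_nonneg)
  have "c1_u n (\<lambda>_. 1) g d l 4 = g * (l\<^sup>2 - l - 1) + d + d * g * (l - 1) + g\<^sup>2"
    by (simp add: c1_u_def algebra_simps)
  then show "c1_u n (\<lambda>_. 1) g d l 4 > 0"
    using assms dg l by (smt (verit) mult_pos_pos zero_le_power2)
  have "c1_v n (\<lambda>_. 1) g d l 4 = d * (l\<^sup>2 - l - 1) + g + d\<^sup>2 + d * g * (l - 1)"
    by (simp add: c1_v_def algebra_simps)
  then show "c1_v n (\<lambda>_. 1) g d l 4 > 0"
    using assms dg l by (smt (verit) mult_pos_pos zero_le_power2)
  have "c1_z n (\<lambda>_. 1) g d l 1 = d * g * l * (d + g + l - 2)"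
    "c1_z n (\<lambda>_. 1) g d l 2 = d * g * (l\<^sup>2 - l - 1) + g\<^sup>2 + g * (l - 1) + d"
    "c1_z n (\<lambda>_. 1) g d l 3 = d * g * (l\<^sup>2 - l - 1) + g + d\<^sup>2 + d * (l - 1)"
    "c1_z n (\<lambda>_. 1) g d l 4 = d * g * (l\<^sup>2 - 4) + g + d + d\<^sup>2 * g + g\<^sup>2 * d"
    by (simp_all add: c1_z_def algebra_simps)
  moreover have "d * g * l * (d + g + l - 2) > 0" using assms dg by simp
  ultimately show "\<forall>k\<in>{1..4}. c1_z n (\<lambda>_. 1) g d l k > 0"
    unfolding ball_atLeastAtMost_1_4 using assms dg l
    by (smt (verit) mult_pos_pos mult_nonneg_nonneg zero_le_power2)
qed

text \<open>The closed forms at \<open>x = 1\<close> are the solutions of the aggregated system; general \<open>x\<close> enters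
  only through the diagonal similarity.\<close>

lemma c1_eq_expand:
  assumes x0: "x 0 = 1" and x: "\<forall>j\<in>{1..n}. x (j - 1) > 0" and n: "n \<ge> 4"
  shows "\<forall>i\<in>{1..n}. c1_w n x g d l i = expand_vector 4 x (c1_w n (\<lambda>_. 1) g d l) i"
    and "\<forall>i\<in>{1..n}. c1_u n x g d l i = x 1 * expand_vector 4 x (c1_u n (\<lambda>_. 1) g d l) i"
    and "\<forall>i\<in>{1..n}. c1_v n x g d l i = x 2 * expand_vector 4 x (c1_v n (\<lambda>_. 1) g d l) i"
    and "\<forall>i\<in>{1..n}. c1_z n x g d l i = x 3 * expand_vector 4 x (c1_z n (\<lambda>_. 1) g d l) i"
proof -
  have "x 1 > 0" "x 2 > 0" "x 3 > 0" using x n by (auto dest: bspec[of _ _ 2] bspec[of _ _ 3] bspec[of _ _ 4])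
  moreover have "i = 1 \<or> i = 2 \<or> i = 3 \<or> i \<ge> 4" if "i \<in> {1..n}" for i :: nat using that by auto
  ultimately show "\<forall>i\<in>{1..n}. c1_w n x g d l i = expand_vector 4 x (c1_w n (\<lambda>_. 1) g d l) i"
    and "\<forall>i\<in>{1..n}. c1_u n x g d l i = x 1 * expand_vector 4 x (c1_u n (\<lambda>_. 1) g d l) i"
    and "\<forall>i\<in>{1..n}. c1_v n x g d l i = x 2 * expand_vector 4 x (c1_v n (\<lambda>_. 1) g d l) i"
    and "\<forall>i\<in>{1..n}. c1_z n x g d l i = x 3 * expand_vector 4 x (c1_z n (\<lambda>_. 1) g d l) i"
    using x0 by (fastforce simp: expand_vector_def c1_w_def c1_u_def c1_v_def c1_z_def min_def)+
qed

lemma P_perron_root: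
  assumes n: "n \<ge> 4" and x0: "x 0 = 1" and x: "\<forall>j\<in>{1..n}. x (j - 1) \<noteq> 0"
    and d: "d > 0" and g: "g > 0" and perron: "perron_eigenvalue n (P_mat x g d) l"
  shows "l \<ge> 2" and "P_charpoly (real n) g d l = 0"
proof -
  obtain r where r: "r \<ge> 2" "P_charpoly (real n) g d r = 0" using P_charpoly_root[OF n d g] by blast
  have "c1_w n (\<lambda>_. 1) g d r 4 \<noteq> 0" using P_reduced_pos(1)[OF r(1) d g, of n] by simp
  from perron_eigenvalue_aggregated[OF P_mat_factor[where x = x, OF x0] x _ n
      P_aggregated_solution[OF n d g r(2)] _ this _ perron]
  obtain V where "r \<le> l" "\<forall>k\<in>{1..4}. aggregated_row n 4 (P_kernel g d) V k = l * V k"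
    "\<exists>k\<in>{1..4}. V k \<noteq> 0"
    using r(1) by auto
  moreover from \<open>r \<le> l\<close> r(1) show "l \<ge> 2" by simp
  ultimately show "P_charpoly (real n) g d l = 0" using P_charpoly_eq_zero[OF n d g] by simp
qed

lemma P_proportional:
  assumes n: "n \<ge> 4" and x0: "x 0 = 1" and x: "\<forall>j\<in>{1..n}. x (j - 1) > 0"
    and d: "d > 0" and g: "g > 0" and l: "l \<ge> 2" "P_charpoly (real n) g d l = 0"
  shows "\<exists>c. \<forall>i\<in>{1..n}. c1_w n x g d l i = c * c1_u n x g d l i"
    and "\<exists>c. \<forall>i\<in>{1..n}. c1_w n x g d l i = c * c1_v n x g d l i"
    and "\<exists>c. \<forall>i\<in>{1..n}. c1_w n x g d l i = c * c1_z n x g d l i"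
proof -
  note w = c1_eq_expand(1)[OF x0 x n] and pos = P_reduced_pos[OF l(1) d g, of n]
  have x123: "x 1 > 0" "x 2 > 0" "x 3 > 0"
    using x n by (auto dest: bspec[of _ _ 2] bspec[of _ _ 3] bspec[of _ _ 4])
  show "\<exists>c. \<forall>i\<in>{1..n}. c1_w n x g d l i = c * c1_u n x g d l i"
    by (rule proportional_of_minors[OF w c1_eq_expand(2)[OF x0 x n] P_minors(1)[OF l(2)]])
      (use pos x123 in auto)
  show "\<exists>c. \<forall>i\<in>{1..n}. c1_w n x g d l i = c * c1_v n x g d l i"
    by (rule proportional_of_minors[OF w c1_eq_expand(3)[OF x0 x n] P_minors(2)[OF l(2)]])
      (use pos x123 in auto)
  show "\<exists>c. \<forall>i\<in>{1..n}. c1_w n x g d l i = c * c1_z n x g d l i"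
    by (rule proportional_of_minors[OF w c1_eq_expand(4)[OF x0 x n] P_minors(3)[OF l(2)]])
      (use pos(4)[unfolded ball_atLeastAtMost_1_4] x123 in auto)
qed

lemma P_case:
  assumes n: "n \<ge> 4" and x0: "x 0 = 1" and x: "\<forall>j\<in>{1..n}. x (j - 1) > 0"
    and d: "d > 0" and g: "g > 0" and perron: "perron_eigenvalue n (P_mat x g d) l"
  shows "principal_right_eigenvector n (P_mat x g d) (c1_w n x g d l) \<and>
    (\<exists>c. \<forall>i\<in>{1..n}. c1_w n x g d l i = c * c1_u n x g d l i) \<and>
    (\<exists>c. \<forall>i\<in>{1..n}. c1_w n x g d l i = c * c1_v n x g d l i) \<and>
    (\<exists>c. \<forall>i\<in>{1..n}. c1_w n x g d l i = c * c1_z n x g d l i)"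
proof -
  have x': "\<forall>j\<in>{1..n}. x (j - 1) \<noteq> 0" using x by force
  note l = P_perron_root[OF n x0 x' d g perron]
  note w = c1_eq_expand(1)[OF x0 x n] and pos = P_reduced_pos[OF l(1) d g, of n]
  note proportional = P_proportional[OF n x0 x d g l]
  have x3: "x 3 > 0" using x n by (auto dest: bspec[of _ _ 4])
  have z_pos: "c1_z n x g d l i > 0" if "i \<in> {1..n}" for i
    using c1_eq_expand(4)[OF x0 x n] pos(4) x3 x that n by (auto simp: expand_vector_def)
  have w4: "c1_w n x g d l 4 > 0" "4 \<in> {1..n}"
    using w pos(1) x3 n by (auto simp: expand_vector_def)
  obtain c where c: "\<forall>i\<in>{1..n}. c1_w n x g d l i = c * c1_z n x g d l i" using proportional(3) by blast
  have "\<forall>i\<in>{1..n}. c1_w n x g d l i > 0"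
    using pos_of_proportional[OF c w4(2,1) z_pos _ z_pos] w4(2) by blast
  moreover have "\<forall>i\<in>{1..n}. (\<Sum>j=1..n. P_mat x g d i j * c1_w n x g d l j) = l * c1_w n x g d l i"
    by (rule eigenvector_expand_vector[OF P_mat_factor[where x = x, OF x0] x' _ n
        P_aggregated_solution[OF n d g l(2)] w]) simp
  ultimately show ?thesis
    using proportional perron unfolding principal_right_eigenvector_def by blast
qed

section \<open>Case 2A: the matrix \<open>Q\<close> with \<open>n = 4\<close>\<close>

definition Q_kernel :: "real \<Rightarrow> real \<Rightarrow> nat \<Rightarrow> nat \<Rightarrow> real" where
  "Q_kernel g d k m =
     (if k = 1 \<and> m = 2 then d else if k = 2 \<and> m = 1 then 1 / d
      else if k = 3 \<and> m = 4 then g else if k = 4 \<and> m = 3 then 1 / g else 1)"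

lemma Q_mat_factor:
  assumes "x 0 = 1" "5 \<le> K \<or> n \<le> K"
  shows "\<forall>i\<in>{1..n}. \<forall>j\<in>{1..n}. Q_mat x g d i j = x (j - 1) / x (i - 1) * Q_kernel g d (min i K) (min j K)"
proof (intro ballI)
  fix i j assume ij: "i \<in> {1..n}" "j \<in> {1..n}"
  have "min k K = m \<longleftrightarrow> k = m" if "k \<in> {1..n}" "m \<le> 4" for k m
    using assms(2) that by (auto simp: min_def)
  then have "Q_kernel g d (min i K) (min j K) = Q_kernel g d i j"
    using ij unfolding Q_kernel_def by simp
  then show "Q_mat x g d i j = x (j - 1) / x (i - 1) * Q_kernel g d (min i K) (min j K)"
    using assms(1) ij by (auto simp: Q_mat_def Q_kernel_def)
qed

lemma Q4_aggregated_iff: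
  assumes "d > 0" "g > 0"
  shows "(\<forall>k\<in>{1..4}. aggregated_row 4 4 (Q_kernel g d) W k = l * W k) \<longleftrightarrow>
    W 1 + d * W 2 + W 3 + W 4 = l * W 1 \<and>
    W 1 + d * W 2 + d * W 3 + d * W 4 = d * l * W 2 \<and>
    W 1 + W 2 + W 3 + g * W 4 = l * W 3 \<and>
    g * W 1 + g * W 2 + W 3 + g * W 4 = g * l * W 4"
  unfolding ball_atLeastAtMost_1_4 using assms
  by (auto simp: aggregated_row_4 Q_kernel_def field_simps)

definition Q4_charpoly :: "real \<Rightarrow> real \<Rightarrow> real \<Rightarrow> real" where
  "Q4_charpoly g d l = l^4*d*g - 4*l^3*d*g - 2*l*d^2*g - 2*l*d*g^2 + 8*l*d*g - 2*l*d - 2*l*g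
     - d^2*g^2 + 2*d^2*g - d^2 + 2*d*g^2 - 4*d*g + 2*d - g^2 + 2*g - 1"

lemma Q4_charpoly_eq_zero:
  assumes "d > 0" "g > 0"
    and "\<forall>k\<in>{1..4}. aggregated_row 4 4 (Q_kernel g d) V k = l * V k" "\<exists>k\<in>{1..4}. V k \<noteq> 0"
  shows "Q4_charpoly g d l = 0"
proof -
  have "V 1 + d * V 2 + V 3 + V 4 = l * V 1"
    "V 1 + d * V 2 + d * V 3 + d * V 4 = d * l * V 2"
    "V 1 + V 2 + V 3 + g * V 4 = l * V 3"
    "g * V 1 + g * V 2 + V 3 + g * V 4 = g * l * V 4"
    using assms(3) unfolding Q4_aggregated_iff[OF assms(1,2)] by auto
  then have "\<forall>k\<in>{1..4}. Q4_charpoly g d l * V k = 0"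
    unfolding ball_atLeastAtMost_1_4 Q4_charpoly_def by (intro conjI; algebra)
  with assms(4) show ?thesis by auto
qed

lemma Q4_aggregated_solution:
  assumes "d > 0" "g > 0" "Q4_charpoly g d l = 0"
  shows "\<forall>k\<in>{1..4}. aggregated_row 4 4 (Q_kernel g d) (c2a_w (\<lambda>_. 1) g d l) k = l * c2a_w (\<lambda>_. 1) g d l k"
  using assms(3) unfolding Q4_aggregated_iff[OF assms(1,2)] c2a_w_def Q4_charpoly_def
  by (simp only: index_neqs if_True if_False simp_thms div_by_1 mult_1; intro conjI;
      (algebra | simp add: algebra_simps power2_eq_square power3_eq_cube))

lemma Q4_minors:
  assumes "Q4_charpoly g d l = 0"
  defines "W \<equiv> c2a_w (\<lambda>_. 1) g d l"
  shows "\<forall>k\<in>{1..4}. W k * c2a_u (\<lambda>_. 1) g d l 4 = W 4 * c2a_u (\<lambda>_. 1) g d l k"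
    and "\<forall>k\<in>{1..4}. W k * c2a_v (\<lambda>_. 1) g d l 2 = W 2 * c2a_v (\<lambda>_. 1) g d l k"
    and "\<forall>k\<in>{1..4}. W k * c2a_z (\<lambda>_. 1) g d l 1 = W 1 * c2a_z (\<lambda>_. 1) g d l k"
  using assms(1) unfolding ball_atLeastAtMost_1_4 W_def c2a_w_def c2a_u_def c2a_v_def c2a_z_def Q4_charpoly_def
  by (simp only: index_neqs if_True if_False simp_thms div_by_1 mult_1; intro conjI;
      (algebra | simp add: algebra_simps power2_eq_square power3_eq_cube))+

lemma Q4_charpoly_root:
  assumes "d > 0" "g > 0"
  shows "\<exists>r\<ge>2. Q4_charpoly g d r = 0"
proof (rule real_root_above)
  show "Q4_charpoly g d t = (d * g) * t ^ 3 * (t - 4) + 0 * t\<^sup>2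
      + (- 2*d^2*g - 2*d*g^2 + 8*d*g - 2*d - 2*g) * t + Q4_charpoly g d 0" for t
    by (simp add: Q4_charpoly_def eval_nat_numeral algebra_simps)
  have "Q4_charpoly g d 2 = - (4 * (d\<^sup>2 * g + d * g\<^sup>2 + d + g)) - ((d - 1) * (g - 1))\<^sup>2"
    by (simp add: Q4_charpoly_def algebra_simps power2_eq_square)
  moreover have "d\<^sup>2 * g + d * g\<^sup>2 + d + g > 0"
    using assms by (auto intro!: add_pos_pos)
  ultimately show "Q4_charpoly g d 2 < 0"
    by (smt (verit) zero_le_power2)
qed (use assms in auto)

lemma Q4_reduced_pos:
  assumes "l \<ge> 2" "d > 0" "g > 0"
  shows "c2a_w (\<lambda>_. 1) g d l 2 > 0" "c2a_w (\<lambda>_. 1) g d l 3 > 0" "c2a_w (\<lambda>_. 1) g d l 4 > 0"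
    and "c2a_u (\<lambda>_. 1) g d l 1 > 0" "c2a_u (\<lambda>_. 1) g d l 4 > 0"
    and "c2a_v (\<lambda>_. 1) g d l 2 > 0" "c2a_z (\<lambda>_. 1) g d l 1 > 0"
proof -
  have l: "l - 1 \<ge> 1" "l * (l - 2) \<ge> 0" using assms(1) by simp_all
  have dg: "d * g > 0" using assms by simp
  have "c2a_w (\<lambda>_. 1) g d l 2 = g * (l * (l - 2)) + d + 2 * (d * g * (l - 1)) + d * g\<^sup>2"
    by (simp add: c2a_w_def algebra_simps power2_eq_square)
  then show "c2a_w (\<lambda>_. 1) g d l 2 > 0"
    using assms dg l by (smt (verit) mult_nonneg_nonneg mult_pos_pos zero_le_power2)
  have "c2a_w (\<lambda>_. 1) g d l 3 = g * (g + (l - 1) + d * (l - 1)\<^sup>2 + d * g * (l - 1))"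
    by (simp add: c2a_w_def algebra_simps power2_eq_square)
  then show "c2a_w (\<lambda>_. 1) g d l 3 > 0"
    using assms dg l by (smt (verit) mult_nonneg_nonneg mult_pos_pos zero_le_power2)
  have "c2a_w (\<lambda>_. 1) g d l 4 = 1 + g * (l - 1) + d * (l - 1) + d * g * (l - 1)\<^sup>2"
    by (simp add: c2a_w_def algebra_simps power2_eq_square)
  then show "c2a_w (\<lambda>_. 1) g d l 4 > 0"
    using assms dg l by (smt (verit) mult_nonneg_nonneg mult_pos_pos zero_le_power2)
  have "c2a_u (\<lambda>_. 1) g d l 1 = d * g * (l * (l - 2)) + (g - 1)\<^sup>2 + 2 * l * g"
    by (simp add: c2a_u_def algebra_simps power2_eq_square)
  then show "c2a_u (\<lambda>_. 1) g d l 1 > 0"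
    using assms dg l by (smt (verit) mult_nonneg_nonneg mult_pos_pos zero_le_power2)
  have "c2a_u (\<lambda>_. 1) g d l 4 = (l - 1) + g * (l - 1)\<^sup>2 + d + d * g * (l - 1)"
    by (simp add: c2a_u_def algebra_simps power2_eq_square)
  then show "c2a_u (\<lambda>_. 1) g d l 4 > 0"
    using assms dg l by (smt (verit) mult_nonneg_nonneg mult_pos_pos zero_le_power2)
  have "c2a_v (\<lambda>_. 1) g d l 2 = 1 + g * (l - 1) + d * (l - 1) + d * g * (l - 1)\<^sup>2"
    by (simp add: c2a_v_def algebra_simps power2_eq_square)
  then show "c2a_v (\<lambda>_. 1) g d l 2 > 0"
    using assms dg l by (smt (verit) mult_nonneg_nonneg mult_pos_pos zero_le_power2)
  have "c2a_z (\<lambda>_. 1) g d l 1 = d * (l * (l - 2) + g * (l - 1) + 1 + d * (l - 1) + d * g)"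
    by (simp add: c2a_z_def algebra_simps power2_eq_square)
  then show "c2a_z (\<lambda>_. 1) g d l 1 > 0"
    using assms dg l by (smt (verit) mult_nonneg_nonneg mult_pos_pos zero_le_power2)
qed

lemma c2a_eq_expand:
  assumes x0: "x 0 = 1" and x: "\<forall>j\<in>{1..4}. x (j - 1) > 0"
  shows "\<forall>i\<in>{1..4}. c2a_w x g d l i = expand_vector 4 x (c2a_w (\<lambda>_. 1) g d l) i"
    and "\<forall>i\<in>{1..4}. c2a_u x g d l i = x 1 * expand_vector 4 x (c2a_u (\<lambda>_. 1) g d l) i"
    and "\<forall>i\<in>{1..4}. c2a_v x g d l i = x 2 * expand_vector 4 x (c2a_v (\<lambda>_. 1) g d l) i"
    and "\<forall>i\<in>{1..4}. c2a_z x g d l i = x 3 * expand_vector 4 x (c2a_z (\<lambda>_. 1) g d l) i"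
proof -
  have "x 1 > 0" "x 2 > 0" "x 3 > 0" using x by (auto dest: bspec[of _ _ 2] bspec[of _ _ 3] bspec[of _ _ 4])
  with x0 show "\<forall>i\<in>{1..4}. c2a_w x g d l i = expand_vector 4 x (c2a_w (\<lambda>_. 1) g d l) i"
    and "\<forall>i\<in>{1..4}. c2a_u x g d l i = x 1 * expand_vector 4 x (c2a_u (\<lambda>_. 1) g d l) i"
    and "\<forall>i\<in>{1..4}. c2a_v x g d l i = x 2 * expand_vector 4 x (c2a_v (\<lambda>_. 1) g d l) i"
    and "\<forall>i\<in>{1..4}. c2a_z x g d l i = x 3 * expand_vector 4 x (c2a_z (\<lambda>_. 1) g d l) i"
    unfolding ball_atLeastAtMost_1_4
    by (simp_all add: expand_vector_def c2a_w_def c2a_u_def c2a_v_def c2a_z_def)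
qed

lemma Q4_perron_root:
  assumes x0: "x 0 = 1" and x: "\<forall>j\<in>{1..4}. x (j - 1) \<noteq> 0"
    and d: "d > 0" and g: "g > 0" and perron: "perron_eigenvalue 4 (Q_mat x g d) l"
  shows "l \<ge> 2" and "Q4_charpoly g d l = 0"
proof -
  obtain r where r: "r \<ge> 2" "Q4_charpoly g d r = 0" using Q4_charpoly_root[OF d g] by blast
  have "c2a_w (\<lambda>_. 1) g d r 4 \<noteq> 0" using Q4_reduced_pos(3)[OF r(1) d g] by simp
  from perron_eigenvalue_aggregated[OF Q_mat_factor[where x = x, OF x0] x _ _
      Q4_aggregated_solution[OF d g r(2)] _ this _ perron]
  obtain V where "r \<le> l" "\<forall>k\<in>{1..4}. aggregated_row 4 4 (Q_kernel g d) V k = l * V k"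
    "\<exists>k\<in>{1..4}. V k \<noteq> 0"
    using r(1) by auto
  moreover from \<open>r \<le> l\<close> r(1) show "l \<ge> 2" by simp
  ultimately show "Q4_charpoly g d l = 0" using Q4_charpoly_eq_zero[OF d g] by simp
qed

lemma Q4_proportional:
  assumes x0: "x 0 = 1" and x: "\<forall>j\<in>{1..4}. x (j - 1) > 0"
    and d: "d > 0" and g: "g > 0" and l: "l \<ge> 2" "Q4_charpoly g d l = 0"
  shows "\<exists>c. \<forall>i\<in>{1..4}. c2a_w x g d l i = c * c2a_u x g d l i"
    and "\<exists>c. \<forall>i\<in>{1..4}. c2a_w x g d l i = c * c2a_v x g d l i"
    and "\<exists>c. \<forall>i\<in>{1..4}. c2a_w x g d l i = c * c2a_z x g d l i"
proof -
  note w = c2a_eq_expand(1)[OF x0 x] and pos = Q4_reduced_pos[OF l(1) d g]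
  have x123: "x 1 > 0" "x 2 > 0" "x 3 > 0"
    using x by (auto dest: bspec[of _ _ 2] bspec[of _ _ 3] bspec[of _ _ 4])
  show "\<exists>c. \<forall>i\<in>{1..4}. c2a_w x g d l i = c * c2a_u x g d l i"
    by (rule proportional_of_minors[OF w c2a_eq_expand(2)[OF x0 x] Q4_minors(1)[OF l(2)]])
      (use pos x123 in auto)
  show "\<exists>c. \<forall>i\<in>{1..4}. c2a_w x g d l i = c * c2a_v x g d l i"
    by (rule proportional_of_minors[OF w c2a_eq_expand(3)[OF x0 x] Q4_minors(2)[OF l(2)]])
      (use pos x123 in auto)
  show "\<exists>c. \<forall>i\<in>{1..4}. c2a_w x g d l i = c * c2a_z x g d l i"
    by (rule proportional_of_minors[OF w c2a_eq_expand(4)[OF x0 x] Q4_minors(3)[OF l(2)]])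
      (use pos x123 in auto)
qed

lemma Q4_case:
  assumes x0: "x 0 = 1" and x: "\<forall>j\<in>{1..4}. x (j - 1) > 0"
    and d: "d > 0" and g: "g > 0" and perron: "perron_eigenvalue 4 (Q_mat x g d) l"
  shows "principal_right_eigenvector 4 (Q_mat x g d) (c2a_w x g d l) \<and>
    (\<exists>c. \<forall>i\<in>{1..4}. c2a_w x g d l i = c * c2a_u x g d l i) \<and>
    (\<exists>c. \<forall>i\<in>{1..4}. c2a_w x g d l i = c * c2a_v x g d l i) \<and>
    (\<exists>c. \<forall>i\<in>{1..4}. c2a_w x g d l i = c * c2a_z x g d l i)"
proof -
  have x': "\<forall>j\<in>{1..4}. x (j - 1) \<noteq> 0" using x by force
  note l = Q4_perron_root[OF x0 x' d g perron]
  note w = c2a_eq_expand(1)[OF x0 x] and pos = Q4_reduced_pos[OF l(1) d g]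
  note proportional = Q4_proportional[OF x0 x d g l]
  have x123: "x 1 > 0" "x 2 > 0" "x 3 > 0"
    using x by (auto dest: bspec[of _ _ 2] bspec[of _ _ 3] bspec[of _ _ 4])
  have w234: "c2a_w x g d l i > 0" if "i \<in> {2, 3, 4}" for i
    using that w pos x123 by (auto simp: expand_vector_def)
  moreover have "c2a_w x g d l 1 > 0"
  proof -
    obtain c where c: "\<forall>i\<in>{1..4}. c2a_w x g d l i = c * c2a_u x g d l i"
      using proportional(1) by blast
    have "c2a_u x g d l i > 0" if "i \<in> {1, 4}" for i
      using c2a_eq_expand(2)[OF x0 x] pos x0 x123 that by (auto simp: expand_vector_def)
    moreover have "c2a_w x g d l 4 > 0" using w234 by simp
    ultimately show ?thesis using pos_of_proportional[OF c, of 4 1] by simp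
  qed
  ultimately have "\<forall>i\<in>{1..4}. c2a_w x g d l i > 0"
    unfolding ball_atLeastAtMost_1_4 by simp
  moreover have "\<forall>i\<in>{1..4}. (\<Sum>j=1..4. Q_mat x g d i j * c2a_w x g d l j) = l * c2a_w x g d l i"
    by (rule eigenvector_expand_vector[OF Q_mat_factor[where x = x, OF x0] x' _ _
        Q4_aggregated_solution[OF d g l(2)] w]) simp_all
  ultimately show ?thesis
    using proportional perron unfolding principal_right_eigenvector_def by blast
qed

section \<open>Case 2B: the matrix \<open>R\<close>, i.e. \<open>Q_mat\<close> with \<open>n \<ge> 5\<close>\<close>

lemma Q5_aggregated_iff:
  assumes "n \<ge> 5" "d > 0" "g > 0"
  shows "(\<forall>k\<in>{1..5}. aggregated_row n 5 (Q_kernel g d) W k = l * W k) \<longleftrightarrow>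
    W 1 + d * W 2 + W 3 + W 4 + (real n - 4) * W 5 = l * W 1 \<and>
    W 1 + d * W 2 + d * W 3 + d * W 4 + d * (real n - 4) * W 5 = d * l * W 2 \<and>
    W 1 + W 2 + W 3 + g * W 4 + (real n - 4) * W 5 = l * W 3 \<and>
    g * W 1 + g * W 2 + W 3 + g * W 4 + g * (real n - 4) * W 5 = g * l * W 4 \<and>
    W 1 + W 2 + W 3 + W 4 + (real n - 4) * W 5 = l * W 5"
  unfolding ball_atLeastAtMost_1_5 using assms
  by (auto simp: aggregated_row_5 Q_kernel_def field_simps)

definition Q5_charpoly :: "real \<Rightarrow> real \<Rightarrow> real \<Rightarrow> real \<Rightarrow> real" where
  "Q5_charpoly N g d l = l^5*d*g - l^4*d*g*N - l^2*d^2*g*N + 2*l^2*d^2*g - l^2*d*g^2*N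
     + 2*l^2*d*g^2 + 4*l^2*d*g*N - 8*l^2*d*g - l^2*d*N + 2*l^2*d - l^2*g*N + 2*l^2*g
     - l*d^2*g^2 + 2*l*d^2*g - l*d^2 + 2*l*d*g^2 - 4*l*d*g + 2*l*d - l*g^2 + 2*l*g - l
     - d^2*g^2*N + 4*d^2*g^2 + 2*d^2*g*N - 8*d^2*g - d^2*N + 4*d^2 + 2*d*g^2*N - 8*d*g^2
     - 4*d*g*N + 16*d*g + 2*d*N - 8*d - g^2*N + 4*g^2 + 2*g*N - 8*g - N + 4"

lemma Q5_charpoly_eq_zero:
  assumes "n \<ge> 5" "d > 0" "g > 0"
    and "\<forall>k\<in>{1..5}. aggregated_row n 5 (Q_kernel g d) V k = l * V k" "\<exists>k\<in>{1..5}. V k \<noteq> 0"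
  shows "Q5_charpoly (real n) g d l = 0"
proof -
  have "V 1 + d * V 2 + V 3 + V 4 + (real n - 4) * V 5 = l * V 1"
    "V 1 + d * V 2 + d * V 3 + d * V 4 + d * (real n - 4) * V 5 = d * l * V 2"
    "V 1 + V 2 + V 3 + g * V 4 + (real n - 4) * V 5 = l * V 3"
    "g * V 1 + g * V 2 + V 3 + g * V 4 + g * (real n - 4) * V 5 = g * l * V 4"
    "V 1 + V 2 + V 3 + V 4 + (real n - 4) * V 5 = l * V 5"
    using assms(4) unfolding Q5_aggregated_iff[OF assms(1-3)] by auto
  then have "\<forall>k\<in>{1..5}. Q5_charpoly (real n) g d l * V k = 0"
    unfolding ball_atLeastAtMost_1_5 Q5_charpoly_def by (intro conjI; algebra)
  with assms(5) show ?thesis by auto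
qed

lemma Q5_aggregated_solution:
  assumes "n \<ge> 5" "d > 0" "g > 0" "Q5_charpoly (real n) g d l = 0"
  shows "\<forall>k\<in>{1..5}. aggregated_row n 5 (Q_kernel g d) (c2b_w n (\<lambda>_. 1) g d l) k
    = l * c2b_w n (\<lambda>_. 1) g d l k"
  using assms(4) unfolding Q5_aggregated_iff[OF assms(1-3)] c2b_w_def Q5_charpoly_def
  by (simp only: index_neqs if_True if_False simp_thms div_by_1 mult_1; intro conjI;
      (algebra | simp add: algebra_simps power2_eq_square power3_eq_cube))

lemma Q5_minors:
  assumes "Q5_charpoly (real n) g d l = 0"
  defines "W \<equiv> c2b_w n (\<lambda>_. 1) g d l"
  shows "\<forall>k\<in>{1..5}. W k * c2b_u n (\<lambda>_. 1) g d l 3 = W 3 * c2b_u n (\<lambda>_. 1) g d l k"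
    and "\<forall>k\<in>{1..5}. W k * c2b_v n (\<lambda>_. 1) g d l 5 = W 5 * c2b_v n (\<lambda>_. 1) g d l k"
    and "\<forall>k\<in>{1..5}. W k * c2b_z n (\<lambda>_. 1) g d l 1 = W 1 * c2b_z n (\<lambda>_. 1) g d l k"
    and "\<forall>k\<in>{1..5}. W k * c2b_y n (\<lambda>_. 1) g d l 5 = W 5 * c2b_y n (\<lambda>_. 1) g d l k"
  using assms(1)
  unfolding ball_atLeastAtMost_1_5 W_def c2b_w_def c2b_u_def c2b_v_def c2b_z_def c2b_y_def Q5_charpoly_def
  by (simp only: index_neqs if_True if_False simp_thms div_by_1 mult_1; intro conjI;
      (algebra | simp add: algebra_simps power2_eq_square power3_eq_cube))+

lemma Q5_charpoly_root:
  assumes "n \<ge> 5" "d > 0" "g > 0"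
  shows "\<exists>r\<ge>2. Q5_charpoly (real n) g d r = 0"
proof (rule real_root_above)
  show "Q5_charpoly (real n) g d t = (d * g) * t ^ 4 * (t - real n)
      + (2*d^2*g - d^2*g*real n - d*g^2*real n + 2*d*g^2 + 4*d*g*real n - 8*d*g - d*real n
         + 2*d - g*real n + 2*g) * t\<^sup>2
      + (2*d^2*g - d^2*g^2 - d^2 + 2*d*g^2 - 4*d*g + 2*d - g^2 + 2*g - 1) * t
      + Q5_charpoly (real n) g d 0" for t
    by (simp add: Q5_charpoly_def eval_nat_numeral algebra_simps)
  have "Q5_charpoly (real n) g d 2 = - ((real n - 2) * ((d + 1)\<^sup>2 * (g + 1)\<^sup>2))"
    by (simp add: Q5_charpoly_def algebra_simps power2_eq_square eval_nat_numeral)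
  moreover have "(real n - 2) * ((d + 1)\<^sup>2 * (g + 1)\<^sup>2) > 0"
    using assms by (intro mult_pos_pos) auto
  ultimately show "Q5_charpoly (real n) g d 2 < 0" by simp
qed (use assms in auto)

lemma Q5_reduced_pos:
  assumes "l \<ge> 2" "d > 0" "g > 0"
  shows "c2b_w n (\<lambda>_. 1) g d l 3 > 0" "c2b_w n (\<lambda>_. 1) g d l 4 > 0"
    and "c2b_u n (\<lambda>_. 1) g d l 3 > 0" "c2b_u n (\<lambda>_. 1) g d l 5 > 0"
    and "c2b_v n (\<lambda>_. 1) g d l 1 > 0" "c2b_v n (\<lambda>_. 1) g d l 2 > 0" "c2b_v n (\<lambda>_. 1) g d l 5 > 0"
    and "c2b_z n (\<lambda>_. 1) g d l 1 > 0" "c2b_y n (\<lambda>_. 1) g d l 5 > 0"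
proof -
  have l: "l - 1 \<ge> 1" "l * (l - 2) \<ge> 0" "l > 0" using assms(1) by simp_all
  have dg: "d * g > 0" using assms by simp
  have p1: "1 + g * (l - 1) > 0" "1 + d * (l - 1) > 0" "d + l - 1 > 0"
    using assms l by (smt (verit) mult_pos_pos)+
  have p2: "l * (l - 2) + g * (l - 1) + 1 + d * (l - 1) + d * g > 0"
    using assms l dg by (smt (verit) mult_pos_pos)
  have p3: "d * l\<^sup>2 + (d - 1)\<^sup>2 > 0" "(g - 1)\<^sup>2 + l\<^sup>2 * g > 0"
    using assms l by (smt (verit) mult_pos_pos zero_le_power2 zero_less_power)+
  have "c2b_w n (\<lambda>_. 1) g d l 3 = (g * l) * (g + (l - 1) + d * (l - 1)\<^sup>2 + d * g * (l - 1))"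
    by (simp add: c2b_w_def algebra_simps power2_eq_square)
  moreover have "g + (l - 1) + d * (l - 1)\<^sup>2 + d * g * (l - 1) > 0"
    using assms dg l by (smt (verit) mult_nonneg_nonneg zero_le_power2)
  ultimately show "c2b_w n (\<lambda>_. 1) g d l 3 > 0" using assms l by simp
  have "c2b_w n (\<lambda>_. 1) g d l 4 = l * (1 + g * (l - 1) + d * (l - 1) + d * g * (l - 1)\<^sup>2)"
    by (simp add: c2b_w_def algebra_simps power2_eq_square)
  moreover have "1 + g * (l - 1) + d * (l - 1) + d * g * (l - 1)\<^sup>2 > 0"
    using assms dg l by (smt (verit) mult_nonneg_nonneg zero_le_power2)
  ultimately show "c2b_w n (\<lambda>_. 1) g d l 4 > 0" using l by simp
  have "c2b_u n (\<lambda>_. 1) g d l 3 = (g * l) * (l * (l - 2) + g * (l - 1) + 1 + d * (l - 1) + d * g)"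
    by (simp add: c2b_u_def algebra_simps power2_eq_square)
  then show "c2b_u n (\<lambda>_. 1) g d l 3 > 0" using assms l p2 by simp
  have "c2b_u n (\<lambda>_. 1) g d l 5 = (l - 1) * (g - 1)\<^sup>2 + l\<^sup>2 * g * (l - 1) + d * (g - 1)\<^sup>2 + d * g * l\<^sup>2"
    by (simp add: c2b_u_def algebra_simps power2_eq_square power3_eq_cube)
  moreover have "l\<^sup>2 * g * (l - 1) > 0" "d * g * l\<^sup>2 > 0" using assms l by simp_all
  ultimately show "c2b_u n (\<lambda>_. 1) g d l 5 > 0"
    using assms l by (smt (verit) mult_nonneg_nonneg zero_le_power2)
  have "c2b_v n (\<lambda>_. 1) g d l 1 = (d * l) * ((1 + g * (l - 1)) * (d + l - 1))"
    by (simp add: c2b_v_def algebra_simps)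
  then show "c2b_v n (\<lambda>_. 1) g d l 1 > 0" using assms l p1 by simp
  have "c2b_v n (\<lambda>_. 1) g d l 2 = l * ((1 + g * (l - 1)) * (1 + d * (l - 1)))"
    by (simp add: c2b_v_def algebra_simps)
  then show "c2b_v n (\<lambda>_. 1) g d l 2 > 0" using l p1 by simp
  have "c2b_v n (\<lambda>_. 1) g d l 5 = (1 + g * (l - 1)) * (d * l\<^sup>2 + (d - 1)\<^sup>2)"
    by (simp add: c2b_v_def algebra_simps power2_eq_square)
  then show "c2b_v n (\<lambda>_. 1) g d l 5 > 0" using p1 p3 by simp
  have "c2b_z n (\<lambda>_. 1) g d l 1 = (d * l) * (l * (l - 2) + g * (l - 1) + 1 + d * (l - 1) + d * g)"
    by (simp add: c2b_z_def algebra_simps power2_eq_square)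
  then show "c2b_z n (\<lambda>_. 1) g d l 1 > 0" using assms l p2 by simp
  have "c2b_y n (\<lambda>_. 1) g d l 5 = ((g - 1)\<^sup>2 + l\<^sup>2 * g) * (d * l\<^sup>2 + (d - 1)\<^sup>2)"
    by (simp add: c2b_y_def algebra_simps power2_eq_square)
  then show "c2b_y n (\<lambda>_. 1) g d l 5 > 0" using p3 by simp
qed

lemma c2b_eq_expand:
  assumes x0: "x 0 = 1" and x: "\<forall>j\<in>{1..n}. x (j - 1) > 0" and n: "n \<ge> 5"
  shows "\<forall>i\<in>{1..n}. c2b_w n x g d l i = expand_vector 5 x (c2b_w n (\<lambda>_. 1) g d l) i"
    and "\<forall>i\<in>{1..n}. c2b_u n x g d l i = x 1 * expand_vector 5 x (c2b_u n (\<lambda>_. 1) g d l) i"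
    and "\<forall>i\<in>{1..n}. c2b_v n x g d l i = x 2 * expand_vector 5 x (c2b_v n (\<lambda>_. 1) g d l) i"
    and "\<forall>i\<in>{1..n}. c2b_z n x g d l i = x 3 * expand_vector 5 x (c2b_z n (\<lambda>_. 1) g d l) i"
    and "\<forall>i\<in>{1..n}. c2b_y n x g d l i = x 4 * expand_vector 5 x (c2b_y n (\<lambda>_. 1) g d l) i"
proof -
  have "x 1 > 0" "x 2 > 0" "x 3 > 0" "x 4 > 0"
    using x n by (auto dest: bspec[of _ _ 2] bspec[of _ _ 3] bspec[of _ _ 4] bspec[of _ _ 5])
  moreover have "i = 1 \<or> i = 2 \<or> i = 3 \<or> i = 4 \<or> i \<ge> 5" if "i \<in> {1..n}" for i :: nat
    using that by auto
  ultimately show "\<forall>i\<in>{1..n}. c2b_w n x g d l i = expand_vector 5 x (c2b_w n (\<lambda>_. 1) g d l) i"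
    and "\<forall>i\<in>{1..n}. c2b_u n x g d l i = x 1 * expand_vector 5 x (c2b_u n (\<lambda>_. 1) g d l) i"
    and "\<forall>i\<in>{1..n}. c2b_v n x g d l i = x 2 * expand_vector 5 x (c2b_v n (\<lambda>_. 1) g d l) i"
    and "\<forall>i\<in>{1..n}. c2b_z n x g d l i = x 3 * expand_vector 5 x (c2b_z n (\<lambda>_. 1) g d l) i"
    and "\<forall>i\<in>{1..n}. c2b_y n x g d l i = x 4 * expand_vector 5 x (c2b_y n (\<lambda>_. 1) g d l) i"
    using x0 by (fastforce simp: expand_vector_def c2b_w_def c2b_u_def c2b_v_def c2b_z_def c2b_y_def
        min_def)+
qed

lemma Q5_perron_root:
  assumes n: "n \<ge> 5" and x0: "x 0 = 1" and x: "\<forall>j\<in>{1..n}. x (j - 1) \<noteq> 0"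
    and d: "d > 0" and g: "g > 0" and perron: "perron_eigenvalue n (Q_mat x g d) l"
  shows "l \<ge> 2" and "Q5_charpoly (real n) g d l = 0"
proof -
  obtain r where r: "r \<ge> 2" "Q5_charpoly (real n) g d r = 0" using Q5_charpoly_root[OF n d g] by blast
  have "c2b_w n (\<lambda>_. 1) g d r 3 \<noteq> 0" using Q5_reduced_pos(1)[OF r(1) d g, of n] by simp
  from perron_eigenvalue_aggregated[OF Q_mat_factor[where x = x, OF x0] x _ n
      Q5_aggregated_solution[OF n d g r(2)] _ this _ perron]
  obtain V where "r \<le> l" "\<forall>k\<in>{1..5}. aggregated_row n 5 (Q_kernel g d) V k = l * V k"
    "\<exists>k\<in>{1..5}. V k \<noteq> 0"
    using r(1) by auto
  moreover from \<open>r \<le> l\<close> r(1) show "l \<ge> 2" by simp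
  ultimately show "Q5_charpoly (real n) g d l = 0" using Q5_charpoly_eq_zero[OF n d g] by simp
qed

lemma Q5_proportional:
  assumes n: "n \<ge> 5" and x0: "x 0 = 1" and x: "\<forall>j\<in>{1..n}. x (j - 1) > 0"
    and d: "d > 0" and g: "g > 0" and l: "l \<ge> 2" "Q5_charpoly (real n) g d l = 0"
  shows "\<exists>c. \<forall>i\<in>{1..n}. c2b_w n x g d l i = c * c2b_u n x g d l i"
    and "\<exists>c. \<forall>i\<in>{1..n}. c2b_w n x g d l i = c * c2b_v n x g d l i"
    and "\<exists>c. \<forall>i\<in>{1..n}. c2b_w n x g d l i = c * c2b_z n x g d l i"
    and "\<exists>c. \<forall>i\<in>{1..n}. c2b_w n x g d l i = c * c2b_y n x g d l i"
proof -
  note w = c2b_eq_expand(1)[OF x0 x n] and pos = Q5_reduced_pos[OF l(1) d g, of n]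
  have x1234: "x 1 > 0" "x 2 > 0" "x 3 > 0" "x 4 > 0"
    using x n by (auto dest: bspec[of _ _ 2] bspec[of _ _ 3] bspec[of _ _ 4] bspec[of _ _ 5])
  show "\<exists>c. \<forall>i\<in>{1..n}. c2b_w n x g d l i = c * c2b_u n x g d l i"
    by (rule proportional_of_minors[OF w c2b_eq_expand(2)[OF x0 x n] Q5_minors(1)[OF l(2)]])
      (use pos x1234 in auto)
  show "\<exists>c. \<forall>i\<in>{1..n}. c2b_w n x g d l i = c * c2b_v n x g d l i"
    by (rule proportional_of_minors[OF w c2b_eq_expand(3)[OF x0 x n] Q5_minors(2)[OF l(2)]])
      (use pos x1234 in auto)
  show "\<exists>c. \<forall>i\<in>{1..n}. c2b_w n x g d l i = c * c2b_z n x g d l i"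
    by (rule proportional_of_minors[OF w c2b_eq_expand(4)[OF x0 x n] Q5_minors(3)[OF l(2)]])
      (use pos x1234 in auto)
  show "\<exists>c. \<forall>i\<in>{1..n}. c2b_w n x g d l i = c * c2b_y n x g d l i"
    by (rule proportional_of_minors[OF w c2b_eq_expand(5)[OF x0 x n] Q5_minors(4)[OF l(2)]])
      (use pos x1234 in auto)
qed

text \<open>Positivity of \<open>w\<close> propagates from entry 3 to the tail through \<open>u\<close>, and from entry 5 to
  entries 1 and 2 through \<open>v\<close>.\<close>

lemma Q5_case:
  assumes n: "n \<ge> 5" and x0: "x 0 = 1" and x: "\<forall>j\<in>{1..n}. x (j - 1) > 0"
    and d: "d > 0" and g: "g > 0" and perron: "perron_eigenvalue n (Q_mat x g d) l"
  shows "principal_right_eigenvector n (Q_mat x g d) (c2b_w n x g d l) \<and>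
    (\<exists>c. \<forall>i\<in>{1..n}. c2b_w n x g d l i = c * c2b_u n x g d l i) \<and>
    (\<exists>c. \<forall>i\<in>{1..n}. c2b_w n x g d l i = c * c2b_v n x g d l i) \<and>
    (\<exists>c. \<forall>i\<in>{1..n}. c2b_w n x g d l i = c * c2b_z n x g d l i) \<and>
    (\<exists>c. \<forall>i\<in>{1..n}. c2b_w n x g d l i = c * c2b_y n x g d l i)"
proof -
  have x': "\<forall>j\<in>{1..n}. x (j - 1) \<noteq> 0" using x by force
  note l = Q5_perron_root[OF n x0 x' d g perron]
  note w = c2b_eq_expand(1)[OF x0 x n] and pos = Q5_reduced_pos[OF l(1) d g, of n]
  note proportional = Q5_proportional[OF n x0 x d g l]
  have x1234: "x 1 > 0" "x 2 > 0" "x 3 > 0" "x 4 > 0"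
    using x n by (auto dest: bspec[of _ _ 2] bspec[of _ _ 3] bspec[of _ _ 4] bspec[of _ _ 5])
  have idx: "1 \<in> {1..n}" "2 \<in> {1..n}" "3 \<in> {1..n}" "4 \<in> {1..n}" "5 \<in> {1..n}" using n by auto
  have w34: "c2b_w n x g d l 3 > 0" "c2b_w n x g d l 4 > 0"
    using w idx pos x1234 by (auto simp: expand_vector_def)
  have w_tail: "c2b_w n x g d l i > 0" if i: "i \<in> {1..n}" "i \<ge> 5" for i
  proof -
    obtain c where c: "\<forall>i\<in>{1..n}. c2b_w n x g d l i = c * c2b_u n x g d l i"
      using proportional(1) by blast
    have "c2b_u n x g d l k > 0" if "k = 3 \<or> k \<in> {1..n} \<and> k \<ge> 5" for k
      using that c2b_eq_expand(2)[OF x0 x n] idx pos x1234 x by (auto simp: expand_vector_def)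
    then show ?thesis using pos_of_proportional[OF c idx(3) w34(1)] i by simp
  qed
  have w12: "c2b_w n x g d l 1 > 0" "c2b_w n x g d l 2 > 0"
  proof -
    obtain c where c: "\<forall>i\<in>{1..n}. c2b_w n x g d l i = c * c2b_v n x g d l i"
      using proportional(2) by blast
    have "c2b_v n x g d l k > 0" if "k \<in> {1, 2, 5}" for k
      using that c2b_eq_expand(3)[OF x0 x n] idx pos x0 x1234 by (auto simp: expand_vector_def)
    then show "c2b_w n x g d l 1 > 0" "c2b_w n x g d l 2 > 0"
      using pos_of_proportional[OF c idx(5) w_tail[OF idx(5)]] idx by simp_all
  qed
  have "\<forall>i\<in>{1..n}. c2b_w n x g d l i > 0"
  proof
    fix i assume "i \<in> {1..n}"
    then consider "i = 1" | "i = 2" | "i = 3" | "i = 4" | "i \<ge> 5" by fastforce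
    then show "c2b_w n x g d l i > 0" using w12 w34 w_tail \<open>i \<in> {1..n}\<close> by cases auto
  qed
  moreover have "\<forall>i\<in>{1..n}. (\<Sum>j=1..n. Q_mat x g d i j * c2b_w n x g d l j) = l * c2b_w n x g d l i"
    by (rule eigenvector_expand_vector[OF Q_mat_factor[where x = x, OF x0] x' _ n
        Q5_aggregated_solution[OF n d g l(2)] w]) simp_all
  ultimately show ?thesis
    using proportional perron unfolding principal_right_eigenvector_def by blast
qed

theorem theorem5:
  fixes n :: nat and x :: "nat \<Rightarrow> real" and g d :: real
  assumes x0: "x 0 = 1"
    and xpos: "\<forall>i\<in>{1..n-1}. x i > 0"
    and gpos: "g > 0" and dpos: "d > 0"
    and g1: "g \<noteq> 1" and d1: "d \<noteq> 1"
  shows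
    "(n \<ge> 4 \<longrightarrow> (\<forall>l. perron_eigenvalue n (P_mat x g d) l \<longrightarrow>
        principal_right_eigenvector n (P_mat x g d) (c1_w n x g d l) \<and>
        (\<exists>c. \<forall>i\<in>{1..n}. c1_w n x g d l i = c * c1_u n x g d l i) \<and>
        (\<exists>c. \<forall>i\<in>{1..n}. c1_w n x g d l i = c * c1_v n x g d l i) \<and>
        (\<exists>c. \<forall>i\<in>{1..n}. c1_w n x g d l i = c * c1_z n x g d l i)))
   \<and> (n = 4 \<longrightarrow> (\<forall>l. perron_eigenvalue n (Q_mat x g d) l \<longrightarrow>
        principal_right_eigenvector n (Q_mat x g d) (c2a_w x g d l) \<and>
        (\<exists>c. \<forall>i\<in>{1..n}. c2a_w x g d l i = c * c2a_u x g d l i) \<and>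
        (\<exists>c. \<forall>i\<in>{1..n}. c2a_w x g d l i = c * c2a_v x g d l i) \<and>
        (\<exists>c. \<forall>i\<in>{1..n}. c2a_w x g d l i = c * c2a_z x g d l i)))
   \<and> (n \<ge> 5 \<longrightarrow> (\<forall>l. perron_eigenvalue n (Q_mat x g d) l \<longrightarrow>
        principal_right_eigenvector n (Q_mat x g d) (c2b_w n x g d l) \<and>
        (\<exists>c. \<forall>i\<in>{1..n}. c2b_w n x g d l i = c * c2b_u n x g d l i) \<and>
        (\<exists>c. \<forall>i\<in>{1..n}. c2b_w n x g d l i = c * c2b_v n x g d l i) \<and>
        (\<exists>c. \<forall>i\<in>{1..n}. c2b_w n x g d l i = c * c2b_z n x g d l i) \<and>
        (\<exists>c. \<forall>i\<in>{1..n}. c2b_w n x g d l i = c * c2b_y n x g d l i)))"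
proof -
  have x: "\<forall>j\<in>{1..n}. x (j - 1) > 0"
  proof
    fix j assume j: "j \<in> {1..n}"
    show "x (j - 1) > 0"
    proof (cases "j = 1")
      case False
      with j have "j - 1 \<in> {1..n-1}" by auto
      with xpos show ?thesis by blast
    qed (use x0 in simp)
  qed
  show ?thesis
    using P_case[where x = x, OF _ x0 x dpos gpos] Q4_case[where x = x, OF x0 _ dpos gpos]
      Q5_case[where x = x, OF _ x0 x dpos gpos] x
    by auto
qed

end
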